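(* Let $\Lambda:=\{(x,y)\in\mathbb{R}^2\mid -1<y<x<1\}$ and let $W$ be a positive weight function on $\Lambda$ with $W(x,y)=W(-y,-x)$. Define $V$ on $\Lambda$ by $$V\big(xy+(1-x^2)^{1/2}(1-y^2)^{1/2},\,xy-(1-x^2)^{1/2}(1-y^2)^{1/2}\big)=W(x,y).$$ Let $P_{n,k}$ be dominance orthogonal symmetric polynomials on $\Lambda$ with respect to the measure $W(x,y)(x-y)\,dx\,dy$, and let $Q_{n,k}$, $R_{n,k}$ be dominance orthogonal symmetric polynomials on $\Lambda$ with respect to $(1+x)^{-1/2}(1+y)^{-1/2}V(x,y)(x-y)\,dx\,dy$ and $(1+x)^{1/2}(1+y)^{1/2}V(x,y)(x-y)\,dx\,dy$, respectively (all relevant moments assumed finite). Assume $P_{n,k}(1,1)\ne0$, $Q_{n,k}(1,1)\ne0$, $R_{n,k}(1,1)\ne0$ for all $n\ge k\ge 0$. Then for all $n\ge k\ge0$ and $(x,y)\in\Lambda$, writing $x_\pm:=xy\pm(1-x^2)^{1/2}(1-y^2)^{1/2}$, $$\frac{Q_{n,k}(x_+,x_-)}{Q_{n,k}(1,1)}=\frac{P_{n+k,n-k}(x,y)}{P_{n+k,n-k}(1,1)},\qquad \frac{(x+y)\,R_{n,k}(x_+,x_-)}{2R_{n,k}(1,1)}=\frac{P_{n+k+1,n-k}(x,y)}{P_{n+k+1,n-k}(1,1)}.$$ Equivalently, with $x=\cos\theta_1$, $y=\cos\theta_2$: $Q_{n,k}(\cos(\theta_1-\theta_2),\cos(\theta_1+\theta_2))/Q_{n,k}(1,1)=P_{n+k,n-k}(\cos\theta_1,\cos\theta_2)/P_{n+k,n-k}(1,1)$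 and $(\cos\theta_1+\cos\theta_2)R_{n,k}(\cos(\theta_1-\theta_2),\cos(\theta_1+\theta_2))/(2R_{n,k}(1,1))=P_{n+k+1,n-k}(\cos\theta_1,\cos\theta_2)/P_{n+k+1,n-k}(1,1)$.
   Context: Pairs $(m,l)$ of integers with $m\ge l\ge0$ carry the dominance partial order $(m,l)\le(n,k)$ iff $m\le n$ and $m+l\le n+k$; $(m,l)<(n,k)$ means $\le$ and $\ne$. A family of dominance orthogonal symmetric polynomials on $\Lambda$ with respect to a measure $d\mu$ consists of symmetric polynomials $P_{n,k}(x,y)=\sum_{(m,l)\le(n,k)}b_{m,l}(x^my^l+x^ly^m)$ with $b_{n,k}\ne0$ such that $\int_\Lambda P_{n,k}(x,y)(x^my^l+x^ly^m)\,d\mu(x,y)=0$ whenever $(m,l)<(n,k)$. *)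

theory Defs
  imports "HOL-Analysis.Analysis"
begin

definition Lambda :: "(real \<times> real) set" where
  "Lambda = {(x, y). -1 < y \<and> y < x \<and> x < 1}"

definition dom_le :: "nat \<times> nat \<Rightarrow> nat \<times> nat \<Rightarrow> bool" where
  "dom_le a b \<longleftrightarrow> fst a \<le> fst b \<and> fst a + snd a \<le> fst b + snd b"

definition dom_lt :: "nat \<times> nat \<Rightarrow> nat \<times> nat \<Rightarrow> bool" where
  "dom_lt a b \<longleftrightarrow> dom_le a b \<and> a \<noteq> b"

definition sym_mono :: "nat \<Rightarrow> nat \<Rightarrow> real \<Rightarrow> real \<Rightarrow> real" where
  "sym_mono m l x y = x ^ m * y ^ l + x ^ l * y ^ m"

definition moments_finite :: "(real \<Rightarrow> real \<Rightarrow> real) \<Rightarrow> bool" where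
  "moments_finite w \<longleftrightarrow>
     (\<forall>a b :: nat. set_integrable lborel Lambda
        (\<lambda>z. fst z ^ a * snd z ^ b * w (fst z) (snd z)))"

text \<open>P is a family of dominance orthogonal symmetric polynomials on Lambda with
  respect to the measure w(x,y) dx dy (w is the full density, e.g. W(x,y)(x-y)).\<close>
definition dominance_orthogonal ::
  "(real \<Rightarrow> real \<Rightarrow> real) \<Rightarrow> (nat \<Rightarrow> nat \<Rightarrow> real \<Rightarrow> real \<Rightarrow> real) \<Rightarrow> bool" where
  "dominance_orthogonal w P \<longleftrightarrow>
     (\<forall>n k. k \<le> n \<longrightarrow>
        (\<exists>b :: nat \<times> nat \<Rightarrow> real. b (n, k) \<noteq> 0 \<and>
           (\<forall>x y. P n k x y =
              (\<Sum>(m, l) \<in> {(m, l). l \<le> m \<and> dom_le (m, l) (n, k)}.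
                  b (m, l) * sym_mono m l x y))) \<and>
        (\<forall>m l. l \<le> m \<and> dom_lt (m, l) (n, k) \<longrightarrow>
           (LINT z:Lambda|lborel. P n k (fst z) (snd z) * sym_mono m l (fst z) (snd z)
                                   * w (fst z) (snd z)) = 0))"

end

theory Submission
  imports Defs
begin

text \<open>With \<open>u = xplus x y\<close> and \<open>v = xminus x y\<close> we have \<open>u + v = 2 x y\<close> and \<open>u v = x\<^sup>2 + y\<^sup>2 - 1\<close>.
  By Newton's identities \<open>(x + y)\<^sup>r sym_mono m l u v\<close> is therefore a symmetric polynomial in \<open>(x, y)\<close>
  whose leading monomial in the dominance order is \<open>sym_mono (m + l + r) (m - l) x y\<close>; conversely, by
  triangularity, every \<open>sym_mono a b x y\<close> with \<open>a + b \<equiv> r (mod 2)\<close> is \<open>(x + y)\<^sup>r\<close> times a polynomial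
  in \<open>(u, v)\<close> of lower dominance degree. The map \<open>(x, y) \<mapsto> (u, v)\<close> is two-to-one from \<open>Lambda\<close> onto
  \<open>Lambda\<close>; on each half it turns \<open>W x y (x - y) dx dy\<close> into
  \<open>V u v (u - v) / (4 sqrt (1 + u) sqrt (1 + v)) du dv\<close>, and \<open>(x + y)\<^sup>2 = (1 + u) (1 + v)\<close>.
  Hence \<open>(x + y)\<^sup>r Q n k u v\<close> (with \<open>R\<close> for \<open>Q\<close> when \<open>r = 1\<close>) is orthogonal, for the weight of \<open>P\<close>, to
  every monomial below \<open>(n + k + r, n - k)\<close> and has that leading monomial. By uniqueness of dominance
  orthogonal polynomials it is a multiple of \<open>P (n + k + r) (n - k)\<close>; evaluating at \<open>(1, 1)\<close>, where
  \<open>u = v = 1\<close>, gives the constant.\<close>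

section \<open>The map \<open>(x, y) \<mapsto> (xplus x y, xminus x y)\<close> and its inverse branches\<close>

definition xplus :: "real \<Rightarrow> real \<Rightarrow> real" where
  "xplus x y = x * y + sqrt (1 - x\<^sup>2) * sqrt (1 - y\<^sup>2)"

definition xminus :: "real \<Rightarrow> real \<Rightarrow> real" where
  "xminus x y = x * y - sqrt (1 - x\<^sup>2) * sqrt (1 - y\<^sup>2)"

lemma xplus_one_one [simp]: "xplus 1 1 = 1" and xminus_one_one [simp]: "xminus 1 1 = 1"
  by (simp_all add: xplus_def xminus_def)

lemma xminus_le_xplus: "\<bar>x\<bar> \<le> 1 \<Longrightarrow> \<bar>y\<bar> \<le> 1 \<Longrightarrow> xminus x y \<le> xplus x y"
  by (simp add: xplus_def xminus_def abs_square_le_1)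

lemma
  assumes "\<bar>x\<bar> \<le> 1" "\<bar>y\<bar> \<le> 1"
  shows xplus_add_xminus: "xplus x y + xminus x y = 2 * x * y"
    and xplus_mult_xminus: "xplus x y * xminus x y = x\<^sup>2 + y\<^sup>2 - 1"
proof -
  show "xplus x y + xminus x y = 2 * x * y" by (simp add: xplus_def xminus_def)
  have "x\<^sup>2 \<le> 1" "y\<^sup>2 \<le> 1" using assms by (simp_all add: abs_square_le_1)
  then have "(sqrt (1 - x\<^sup>2) * sqrt (1 - y\<^sup>2))\<^sup>2 = (1 - x\<^sup>2) * (1 - y\<^sup>2)"
    by (simp add: power_mult_distrib)
  then show "xplus x y * xminus x y = x\<^sup>2 + y\<^sup>2 - 1"
    unfolding xplus_def xminus_def by (simp add: algebra_simps power2_eq_square)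
qed

lemma Lambda_iff: "(x, y) \<in> Lambda \<longleftrightarrow> -1 < y \<and> y < x \<and> x < 1"
  by (simp add: Lambda_def)

lemma Lambda_in_square: "(x, y) \<in> Lambda \<Longrightarrow> \<bar>x\<bar> \<le> 1 \<and> \<bar>y\<bar> \<le> 1"
  by (auto simp: Lambda_def)

lemma open_Lambda: "open Lambda"
proof -
  have "Lambda = {z. -1 < snd z \<and> snd z < fst z \<and> fst z < 1}" by (auto simp: Lambda_def)
  moreover have "open {z::real \<times> real. -1 < snd z \<and> snd z < fst z \<and> fst z < 1}"
    by (intro open_Collect_conj open_Collect_less continuous_intros)
  ultimately show ?thesis by simp
qed

lemma Lambda_borel [measurable]: "Lambda \<in> sets borel"
  using open_Lambda by simp

text \<open>The map \<open>(x, y) \<mapsto> (xplus x y, xminus x y)\<close> is two-to-one from \<open>Lambda\<close> onto \<open>Lambda\<close>,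
  invariant under \<open>(x, y) \<mapsto> (-y, -x)\<close>; the sign of \<open>x + y\<close> selects the preimage.\<close>

definition Lambda_half :: "real \<Rightarrow> (real \<times> real) set" where
  "Lambda_half \<epsilon> = {z \<in> Lambda. 0 < \<epsilon> * (fst z + snd z)}"

definition branch :: "real \<Rightarrow> real \<times> real \<Rightarrow> real \<times> real" where
  "branch \<epsilon> z =
     ((\<epsilon> * sqrt (1 + fst z) * sqrt (1 + snd z) + sqrt (1 - fst z) * sqrt (1 - snd z)) / 2,
      (\<epsilon> * sqrt (1 + fst z) * sqrt (1 + snd z) - sqrt (1 - fst z) * sqrt (1 - snd z)) / 2)"

lemma
  shows fst_branch_add_snd: "fst (branch \<epsilon> (u, v)) + snd (branch \<epsilon> (u, v)) = \<epsilon> * sqrt (1 + u) * sqrt (1 + v)"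
    and fst_branch_diff_snd: "fst (branch \<epsilon> (u, v)) - snd (branch \<epsilon> (u, v)) = sqrt (1 - u) * sqrt (1 - v)"
  by (simp_all add: branch_def field_simps)

lemma branch_neg: "branch (-1) z = (- snd (branch 1 z), - fst (branch 1 z))"
  by (simp add: branch_def field_simps)

lemma Lambda_half_subset: "Lambda_half \<epsilon> \<subseteq> Lambda"
  by (auto simp: Lambda_half_def)

lemma Lambda_half_borel [measurable]: "Lambda_half \<epsilon> \<in> sets borel"
proof -
  have "Lambda_half \<epsilon> = Lambda \<inter> {z. 0 < \<epsilon> * (fst z + snd z)}" by (auto simp: Lambda_half_def)
  moreover have "open {z::real \<times> real. 0 < \<epsilon> * (fst z + snd z)}"
    by (intro open_Collect_less continuous_intros)
  ultimately show ?thesis by simp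
qed

lemma branch_mem_Lambda_half:
  assumes \<epsilon>: "\<epsilon> \<in> {-1, 1}" and uv: "(u, v) \<in> Lambda"
  shows "branch \<epsilon> (u, v) \<in> Lambda_half \<epsilon>"
proof -
  define s where "s = sqrt (1 + u)" define t where "t = sqrt (1 + v)"
  define p where "p = sqrt (1 - u)" define q where "q = sqrt (1 - v)"
  have h: "-1 < v" "v < u" "u < 1" using uv by (simp_all add: Lambda_iff)
  have pos: "s > 0" "t > 0" "p > 0" "q > 0" using h by (auto simp: s_def t_def p_def q_def)
  have sq: "s * s = 1 + u" "t * t = 1 + v" "p * p = 1 - u" "q * q = 1 - v"
    using h by (auto simp: s_def t_def p_def q_def)
  \<comment> \<open>AM-GM, strict because \<open>s \<noteq> t\<close>\<close>
  have "s \<noteq> t" using sq h by auto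
  then have "(s - t) * (s - t) > 0" by (auto simp: zero_less_mult_iff)
  moreover have "(p - q) * (p - q) \<ge> 0" by auto
  ultimately have "s * t + p * q < 2" using sq by (simp add: algebra_simps)
  moreover have "\<bar>\<epsilon>\<bar> = 1" using \<epsilon> by auto
  moreover have "p * q > 0" "s * t > 0" using pos by auto
  moreover have "branch \<epsilon> (u, v) = ((\<epsilon> * s * t + p * q) / 2, (\<epsilon> * s * t - p * q) / 2)"
    by (simp add: branch_def s_def t_def p_def q_def)
  ultimately show ?thesis
    using \<epsilon> by (auto simp: Lambda_half_def Lambda_def field_simps)
qed

lemma eq_if_sum_prod_eq:
  fixes a b c d :: real
  assumes "b \<le> a" "d \<le> c" "a + b = c + d" "a * b = c * d"
  shows "a = c" "b = d"
proof -
  have "(a - b)\<^sup>2 = (a + b)\<^sup>2 - 4 * (a * b)" "(c - d)\<^sup>2 = (c + d)\<^sup>2 - 4 * (c * d)"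
    by (simp_all add: power2_eq_square algebra_simps)
  then have "(a - b)\<^sup>2 = (c - d)\<^sup>2" using assms(3,4) by simp
  then have "a - b = c - d" using assms(1,2) by (simp add: power2_eq_iff_nonneg)
  then show "a = c" "b = d" using assms(3) by linarith+
qed

lemma
  assumes \<epsilon>: "\<epsilon> \<in> {-1, 1}" and uv: "(u, v) \<in> Lambda"
  shows xplus_branch: "xplus (fst (branch \<epsilon> (u, v))) (snd (branch \<epsilon> (u, v))) = u"
    and xminus_branch: "xminus (fst (branch \<epsilon> (u, v))) (snd (branch \<epsilon> (u, v))) = v"
proof -
  obtain x y where xy: "branch \<epsilon> (u, v) = (x, y)" by fastforce
  have "(x, y) \<in> Lambda" using branch_mem_Lambda_half[OF \<epsilon> uv] Lambda_half_subset xy by auto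
  then have sq: "\<bar>x\<bar> \<le> 1" "\<bar>y\<bar> \<le> 1" using Lambda_in_square by blast+
  have h: "-1 < v" "v < u" "u < 1" using uv by (simp_all add: Lambda_iff)
  have s: "x + y = \<epsilon> * sqrt (1 + u) * sqrt (1 + v)" and d: "x - y = sqrt (1 - u) * sqrt (1 - v)"
    using fst_branch_add_snd[of \<epsilon> u v] fst_branch_diff_snd[of \<epsilon> u v] xy by simp_all
  have "(x + y)\<^sup>2 = (1 + u) * (1 + v)" "(x - y)\<^sup>2 = (1 - u) * (1 - v)"
    unfolding s d using \<epsilon> h by (auto simp: power_mult_distrib)
  then have "2 * x * y = u + v" "x\<^sup>2 + y\<^sup>2 - 1 = u * v"
    by (simp_all add: power2_eq_square algebra_simps)
  then have "xplus x y + xminus x y = u + v" "xplus x y * xminus x y = u * v"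
    using xplus_add_xminus[OF sq] xplus_mult_xminus[OF sq] by simp_all
  from eq_if_sum_prod_eq[OF xminus_le_xplus[OF sq] _ this] h
  show "xplus (fst (branch \<epsilon> (u, v))) (snd (branch \<epsilon> (u, v))) = u"
    "xminus (fst (branch \<epsilon> (u, v))) (snd (branch \<epsilon> (u, v))) = v"
    unfolding xy by simp_all
qed

lemma pos_if_mult_pos_add_pos: "0 < a * b \<Longrightarrow> 0 < a + b \<Longrightarrow> 0 < a \<and> 0 < (b::real)"
  by (auto simp: zero_less_mult_iff)

lemma
  assumes \<epsilon>: "\<epsilon> \<in> {-1, 1}" and xy: "(x, y) \<in> Lambda_half \<epsilon>"
  shows xplus_xminus_mem_Lambda: "(xplus x y, xminus x y) \<in> Lambda"
    and branch_xplus_xminus: "branch \<epsilon> (xplus x y, xminus x y) = (x, y)"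
proof -
  have h: "-1 < y" "y < x" "x < 1" "0 < \<epsilon> * (x + y)"
    using xy by (simp_all add: Lambda_half_def Lambda_iff)
  have sq: "\<bar>x\<bar> \<le> 1" "\<bar>y\<bar> \<le> 1" using h by auto
  have "x\<^sup>2 < 1" "y\<^sup>2 < 1" using h by (simp_all add: abs_square_less_1)
  then have r: "sqrt (1 - x\<^sup>2) * sqrt (1 - y\<^sup>2) > 0" by simp
  have plus: "(1 + xplus x y) * (1 + xminus x y) = (x + y)\<^sup>2"
    and minus: "(1 - xplus x y) * (1 - xminus x y) = (x - y)\<^sup>2"
    using xplus_add_xminus[OF sq] xplus_mult_xminus[OF sq]
    by (simp_all add: algebra_simps power2_eq_square)
  have "\<bar>x\<bar> * \<bar>y\<bar> \<le> \<bar>x\<bar>" using sq by (simp add: mult_left_le)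
  then have "x + y \<noteq> 0" "x - y \<noteq> 0" "\<bar>x * y\<bar> < 1" using h by (auto simp: abs_mult)
  then have "0 < 1 + xminus x y" "0 < 1 - xplus x y"
    using pos_if_mult_pos_add_pos[of "1 + xplus x y" "1 + xminus x y"]
      pos_if_mult_pos_add_pos[of "1 - xplus x y" "1 - xminus x y"] plus minus xplus_add_xminus[OF sq]
    by auto
  moreover have "xminus x y < xplus x y" using r by (simp add: xplus_def xminus_def)
  ultimately show "(xplus x y, xminus x y) \<in> Lambda" by (simp add: Lambda_iff)
  have "\<epsilon> * \<epsilon> = 1" using \<epsilon> by auto
  then have A: "\<epsilon> * sqrt (1 + xplus x y) * sqrt (1 + xminus x y) = x + y"
    using \<epsilon> h by (auto simp: mult.assoc real_sqrt_mult[symmetric] plus)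
  have B: "sqrt (1 - xplus x y) * sqrt (1 - xminus x y) = x - y"
    using h by (simp add: real_sqrt_mult[symmetric] minus)
  show "branch \<epsilon> (xplus x y, xminus x y) = (x, y)"
    unfolding branch_def fst_conv snd_conv A B by simp
qed

section \<open>Change of variables along the branches\<close>

lemma integral_measure_preserving:
  fixes H :: "'b::euclidean_space \<Rightarrow> real"
  assumes T: "T \<in> borel_measurable borel" and distr: "distr lborel borel T = lborel"
    and H: "integrable lborel H"
  shows "integrable lborel (\<lambda>x. H (T x))" "(\<integral>x. H (T x) \<partial>lborel) = integral\<^sup>L lborel H"
proof -
  have m: "H \<in> borel_measurable borel" using borel_measurable_integrable[OF H] by simp
  show "integrable lborel (\<lambda>x. H (T x))"
    using integrable_distr_eq[of T lborel borel H] T m H by (simp add: distr)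
  have "integral\<^sup>L (distr lborel borel T) H = (\<integral>x. H (T x) \<partial>lborel)"
    by (rule integral_distr) (use T m in auto)
  then show "(\<integral>x. H (T x) \<partial>lborel) = integral\<^sup>L lborel H" by (simp add: distr)
qed

lemma set_integral_measure_preserving:
  fixes H :: "'b::euclidean_space \<Rightarrow> real"
  assumes T: "T \<in> borel_measurable borel" and distr: "distr lborel borel T = lborel"
    and H: "set_integrable lborel A H" and B: "\<And>x. x \<in> B \<longleftrightarrow> T x \<in> A"
  shows "set_integrable lborel B (\<lambda>x. H (T x))"
    "(LINT x:B|lborel. H (T x)) = (LINT y:A|lborel. H y)"
proof -
  have eq: "(\<lambda>x. indicator B x *\<^sub>R H (T x)) = (\<lambda>x. (\<lambda>y. indicator A y *\<^sub>R H y) (T x))"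
    by (auto simp: indicator_def B)
  show "set_integrable lborel B (\<lambda>x. H (T x))"
    using integral_measure_preserving(1)[OF T distr] H unfolding set_integrable_def eq by blast
  show "(LINT x:B|lborel. H (T x)) = (LINT y:A|lborel. H y)"
    using integral_measure_preserving(2)[OF T distr] H
    unfolding set_integrable_def set_lebesgue_integral_def eq by blast
qed

text \<open>The change of variables theorem of HOL-Analysis is stated for \<open>real^'n\<close>, so Lebesgue measure
  is transported between \<open>real \<times> real\<close> and \<open>real^2\<close>.\<close>

definition vec_of_pair :: "real \<times> real \<Rightarrow> real^2" where
  "vec_of_pair z = fst z *\<^sub>R axis 1 1 + snd z *\<^sub>R axis 2 1"

definition pair_of_vec :: "real^2 \<Rightarrow> real \<times> real" where
  "pair_of_vec w = (w$1, w$2)"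

lemma vec_of_pair_nth [simp]: "vec_of_pair z $ 1 = fst z" "vec_of_pair z $ 2 = snd z"
  by (simp_all add: vec_of_pair_def axis_def)

lemma pair_of_vec_of_pair [simp]: "pair_of_vec (vec_of_pair z) = z"
  by (simp add: pair_of_vec_def)

lemma vec_of_pair_of_vec [simp]: "vec_of_pair (pair_of_vec w) = w"
  by (simp add: pair_of_vec_def vec_eq_iff forall_2)

lemma mem_vec_of_pair_image: "w \<in> vec_of_pair ` S \<longleftrightarrow> pair_of_vec w \<in> S"
  by (metis image_iff pair_of_vec_of_pair vec_of_pair_of_vec)

lemma vec_of_pair_borel [measurable]: "vec_of_pair \<in> borel_measurable borel"
  unfolding vec_of_pair_def by (intro borel_measurable_continuous_onI continuous_intros)

lemma pair_of_vec_borel [measurable]: "pair_of_vec \<in> borel_measurable borel"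
  unfolding pair_of_vec_def by (intro borel_measurable_continuous_onI continuous_intros)

lemma lborel_distr_vec_of_pair: "distr lborel borel vec_of_pair = lborel"
proof (rule lborel_eqI[symmetric])
  have basis: "(Basis :: (real^2) set) = {axis 1 1, axis 2 1}"
    by (auto simp: Basis_vec_def UNIV_2)
  have "axis 1 (1::real) \<noteq> (axis 2 1 :: real^2)" by (simp add: axis_eq_axis)
  fix l u :: "real^2" assume le: "\<And>b. b \<in> Basis \<Longrightarrow> l \<bullet> b \<le> u \<bullet> b"
  have "vec_of_pair -` box l u = box (l$1, l$2) (u$1, u$2)"
    by (auto simp: mem_box Basis_prod_def basis inner_axis)
  then show "emeasure (distr lborel borel vec_of_pair) (box l u) = (\<Prod>b\<in>Basis. (u - l) \<bullet> b)"
    using le[of "axis 1 1"] le[of "axis 2 1"] \<open>axis 1 1 \<noteq> axis 2 1\<close>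
    by (auto simp: emeasure_distr emeasure_lborel_box_eq Basis_prod_def basis inner_axis)
qed simp

lemma lborel_distr_pair_of_vec: "distr lborel borel pair_of_vec = lborel"
proof -
  have "distr lborel borel pair_of_vec = distr (distr lborel borel vec_of_pair) borel pair_of_vec"
    by (simp add: lborel_distr_vec_of_pair)
  also have "\<dots> = distr lborel borel (\<lambda>x. x)"
    by (subst distr_distr) (auto simp: o_def)
  also have "\<dots> = lborel" by (rule distr_id2) simp
  finally show ?thesis .
qed

lemma set_integral_vec_of_pair_image:
  fixes f :: "real \<times> real \<Rightarrow> real"
  assumes "set_integrable lborel S f"
  shows "set_integrable lborel (vec_of_pair ` S) (\<lambda>w. f (pair_of_vec w))"
    "(LINT w:vec_of_pair ` S|lborel. f (pair_of_vec w)) = (LINT z:S|lborel. f z)"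
  by (rule set_integral_measure_preserving[OF pair_of_vec_borel lborel_distr_pair_of_vec assms];
      simp add: mem_vec_of_pair_image)+

lemma set_integral_from_vec_of_pair_image:
  fixes g :: "real^2 \<Rightarrow> real"
  assumes "set_integrable lborel (vec_of_pair ` S) g"
  shows "set_integrable lborel S (\<lambda>z. g (vec_of_pair z))"
    "(LINT z:S|lborel. g (vec_of_pair z)) = (LINT w:vec_of_pair ` S|lborel. g w)"
  by (rule set_integral_measure_preserving[OF vec_of_pair_borel lborel_distr_vec_of_pair assms];
      simp add: mem_vec_of_pair_image)+

definition sqrt_product :: "real \<Rightarrow> real^2 \<Rightarrow> real" where
  "sqrt_product \<sigma> w = sqrt (1 + \<sigma> * w$1) * sqrt (1 + \<sigma> * w$2)"

definition sqrt_product_deriv :: "real \<Rightarrow> real^2 \<Rightarrow> real^2 \<Rightarrow> real" where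
  "sqrt_product_deriv \<sigma> w h = \<sigma> / 2 *
     (sqrt (1 + \<sigma> * w$2) / sqrt (1 + \<sigma> * w$1) * h$1 + sqrt (1 + \<sigma> * w$1) / sqrt (1 + \<sigma> * w$2) * h$2)"

lemma sqrt_product_has_derivative:
  assumes "0 < 1 + \<sigma> * w$1" "0 < 1 + \<sigma> * w$2"
  shows "(sqrt_product \<sigma> has_derivative sqrt_product_deriv \<sigma> w) (at w)"
proof -
  have nth: "\<And>i F. ((\<lambda>x::real^2. x$i) has_derivative (\<lambda>x. x$i)) F"
    by (rule bounded_linear_imp_has_derivative) (rule bounded_linear_vec_nth)
  have sp: "0 < sqrt (1 + \<sigma> * w$1)" "0 < sqrt (1 + \<sigma> * w$2)" using assms by simp_all
  show ?thesis
    unfolding sqrt_product_def[abs_def]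
    by (rule has_derivative_eq_rhs, (rule derivative_eq_intros nth refl assms | simp)+)
      (use sp in \<open>simp add: fun_eq_iff sqrt_product_deriv_def field_simps\<close>)
qed

definition branch_vec :: "real \<Rightarrow> real^2 \<Rightarrow> real^2" where
  "branch_vec \<epsilon> w = vec_of_pair (branch \<epsilon> (pair_of_vec w))"

lemma branch_vec_eq: "branch_vec \<epsilon> = (\<lambda>w. vec_of_pair
    ((\<epsilon> * sqrt_product 1 w + sqrt_product (-1) w) / 2, (\<epsilon> * sqrt_product 1 w - sqrt_product (-1) w) / 2))"
  by (simp add: fun_eq_iff branch_vec_def branch_def sqrt_product_def pair_of_vec_def mult.assoc)

definition branch_derivative :: "real \<Rightarrow> real^2 \<Rightarrow> real^2 \<Rightarrow> real^2" where
  "branch_derivative \<epsilon> w h = vec_of_pair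
    ((\<epsilon> * sqrt_product_deriv 1 w h + sqrt_product_deriv (-1) w h) / 2,
     (\<epsilon> * sqrt_product_deriv 1 w h - sqrt_product_deriv (-1) w h) / 2)"

lemma branch_vec_has_derivative:
  assumes "pair_of_vec w \<in> Lambda"
  shows "(branch_vec \<epsilon> has_derivative branch_derivative \<epsilon> w) (at w)"
proof -
  have "-1 < w$2" "w$2 < w$1" "w$1 < 1" using assms by (simp_all add: pair_of_vec_def Lambda_iff)
  then have d: "(sqrt_product 1 has_derivative sqrt_product_deriv 1 w) (at w)"
      "(sqrt_product (-1) has_derivative sqrt_product_deriv (-1) w) (at w)"
    by (auto intro!: sqrt_product_has_derivative)
  show ?thesis
    unfolding branch_vec_eq branch_derivative_def[abs_def] vec_of_pair_def fst_conv snd_conv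
    by (rule derivative_eq_intros d refl | simp)+
qed

definition branch_jacobian :: "real \<Rightarrow> real \<Rightarrow> real" where
  "branch_jacobian u v = (u - v) / (4 * sqrt (1 + u) * sqrt (1 + v) * sqrt (1 - u) * sqrt (1 - v))"

lemma branch_jacobian_borel [measurable]: "(\<lambda>z. branch_jacobian (fst z) (snd z)) \<in> borel_measurable borel"
  unfolding branch_jacobian_def by (intro borel_measurable_divide borel_measurable_continuous_onI continuous_intros)

lemma abs_det_branch_derivative:
  assumes \<epsilon>: "\<epsilon> \<in> {-1, 1}" and w: "pair_of_vec w \<in> Lambda"
  shows "\<bar>det (matrix (branch_derivative \<epsilon> w))\<bar> = branch_jacobian (w$1) (w$2)"
proof -
  have h: "-1 < w$2" "w$2 < w$1" "w$1 < 1" using w by (simp_all add: pair_of_vec_def Lambda_iff)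
  obtain s t p q where st: "sqrt (1 + w$1) = s" "sqrt (1 + w$2) = t" "sqrt (1 - w$1) = p" "sqrt (1 - w$2) = q"
    by blast
  have pos: "s > 0" "t > 0" "p > 0" "q > 0" using h st by auto
  have sq: "s * s = 1 + w$1" "t * t = 1 + w$2" "p * p = 1 - w$1" "q * q = 1 - w$2"
    using h st by auto
  have "det (matrix (branch_derivative \<epsilon> w)) = \<epsilon> * ((t * t) * (p * p) - (s * s) * (q * q)) / (8 * s * t * p * q)"
    using pos by (simp add: det_2 matrix_def branch_derivative_def sqrt_product_deriv_def axis_def st field_simps)
  also have "\<dots> = \<epsilon> * (w$2 - w$1) / (4 * s * t * p * q)"
    unfolding sq using pos by (simp add: field_simps)
  finally show ?thesis
    using \<epsilon> h pos by (auto simp: abs_mult branch_jacobian_def st)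
qed

lemma branch_vec_image:
  assumes \<epsilon>: "\<epsilon> \<in> {-1, 1}"
  shows "branch_vec \<epsilon> ` vec_of_pair ` Lambda = vec_of_pair ` Lambda_half \<epsilon>"
proof -
  have "branch \<epsilon> ` Lambda = Lambda_half \<epsilon>"
  proof
    show "branch \<epsilon> ` Lambda \<subseteq> Lambda_half \<epsilon>"
      using branch_mem_Lambda_half[OF \<epsilon>] by auto
    show "Lambda_half \<epsilon> \<subseteq> branch \<epsilon> ` Lambda"
      using xplus_xminus_mem_Lambda[OF \<epsilon>] branch_xplus_xminus[OF \<epsilon>] by (force simp: image_iff)
  qed
  moreover have "branch_vec \<epsilon> ` vec_of_pair ` Lambda = vec_of_pair ` branch \<epsilon> ` Lambda"
    by (simp add: branch_vec_def image_image)
  ultimately show ?thesis by simp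
qed

lemma inj_on_branch_vec:
  assumes \<epsilon>: "\<epsilon> \<in> {-1, 1}"
  shows "inj_on (branch_vec \<epsilon>) (vec_of_pair ` Lambda)"
proof -
  have "inj_on (branch \<epsilon>) Lambda"
    by (rule inj_on_inverseI[where g = "\<lambda>z. (xplus (fst z) (snd z), xminus (fst z) (snd z))"])
       (auto simp: xplus_branch[OF \<epsilon>] xminus_branch[OF \<epsilon>])
  then show ?thesis
    by (auto simp: inj_on_def branch_vec_def) (metis pair_of_vec_of_pair)
qed

lemma vec_of_pair_Lambda_lebesgue: "vec_of_pair ` Lambda \<in> sets lebesgue"
proof -
  have "vec_of_pair ` Lambda = {w. -1 < w$2 \<and> w$2 < w$1 \<and> w$1 < 1}"
    by (auto simp: mem_vec_of_pair_image pair_of_vec_def Lambda_iff)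
  moreover have "open {w::real^2. -1 < w$2 \<and> w$2 < w$1 \<and> w$1 < 1}"
    by (intro open_Collect_conj open_Collect_less continuous_intros)
  ultimately show ?thesis by simp
qed

lemma branch_change_of_variables:
  fixes F :: "real^2 \<Rightarrow> real"
  assumes \<epsilon>: "\<epsilon> \<in> {-1, 1}"
  shows "(\<lambda>w. branch_jacobian (w$1) (w$2) * F (branch_vec \<epsilon> w)) absolutely_integrable_on vec_of_pair ` Lambda
      \<and> integral (vec_of_pair ` Lambda) (\<lambda>w. branch_jacobian (w$1) (w$2) * F (branch_vec \<epsilon> w)) = b
    \<longleftrightarrow> F absolutely_integrable_on vec_of_pair ` Lambda_half \<epsilon>
      \<and> integral (vec_of_pair ` Lambda_half \<epsilon>) F = b"
proof -
  let ?S = "vec_of_pair ` Lambda"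
  have der: "(branch_vec \<epsilon> has_derivative branch_derivative \<epsilon> w) (at w within ?S)" if "w \<in> ?S" for w
    using that by (auto intro!: has_derivative_at_withinI[OF branch_vec_has_derivative] simp: mem_vec_of_pair_image)
  let ?F1 = "\<lambda>x. vec (F x) :: real^1"
  have cv: "(\<lambda>w. \<bar>det (matrix (branch_derivative \<epsilon> w))\<bar> *\<^sub>R ?F1 (branch_vec \<epsilon> w)) absolutely_integrable_on ?S
      \<and> integral ?S (\<lambda>w. \<bar>det (matrix (branch_derivative \<epsilon> w))\<bar> *\<^sub>R ?F1 (branch_vec \<epsilon> w)) = vec b
    \<longleftrightarrow> ?F1 absolutely_integrable_on vec_of_pair ` Lambda_half \<epsilon>
      \<and> integral (vec_of_pair ` Lambda_half \<epsilon>) ?F1 = vec b"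
    by (rule has_absolute_integral_change_of_variables[OF vec_of_pair_Lambda_lebesgue der inj_on_branch_vec[OF \<epsilon>],
      unfolded branch_vec_image[OF \<epsilon>]]) simp_all
  have jac: "\<bar>det (matrix (branch_derivative \<epsilon> w))\<bar> * F (branch_vec \<epsilon> w)
      = branch_jacobian (w$1) (w$2) * F (branch_vec \<epsilon> w)" if "w \<in> ?S" for w
    using that abs_det_branch_derivative[OF \<epsilon>] by (simp add: mem_vec_of_pair_image)
  have vec_ai: "(\<lambda>x. vec (G x) :: real^1) absolutely_integrable_on T \<longleftrightarrow> G absolutely_integrable_on T" for G T
    by (simp add: absolutely_integrable_on_1_iff)
  have vec_int: "integral T (\<lambda>x. vec (G x) :: real^1) = vec b \<longleftrightarrow> integral T G = b" for G T
    by (simp add: integral_on_1_eq)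
  have scale: "c *\<^sub>R vec y = (vec (c * y) :: real^1)" for c y
    by (simp add: vec_eq_iff)
  have "(\<lambda>w. \<bar>det (matrix (branch_derivative \<epsilon> w))\<bar> * F (branch_vec \<epsilon> w)) absolutely_integrable_on ?S
      \<longleftrightarrow> (\<lambda>w. branch_jacobian (w$1) (w$2) * F (branch_vec \<epsilon> w)) absolutely_integrable_on ?S"
    by (rule set_integrable_cong) (simp_all add: jac)
  moreover have "integral ?S (\<lambda>w. \<bar>det (matrix (branch_derivative \<epsilon> w))\<bar> * F (branch_vec \<epsilon> w))
      = integral ?S (\<lambda>w. branch_jacobian (w$1) (w$2) * F (branch_vec \<epsilon> w))"
    by (rule integral_cong) (simp add: jac)
  ultimately show ?thesis
    using cv unfolding scale vec_ai vec_int by simp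
qed

lemma branch_borel [measurable]: "branch \<epsilon> \<in> borel_measurable borel"
  unfolding branch_def by (intro borel_measurable_continuous_onI continuous_intros) auto

lemma set_integral_branch:
  fixes f :: "real \<times> real \<Rightarrow> real"
  assumes \<epsilon>: "\<epsilon> \<in> {-1, 1}" and f: "set_integrable lborel (Lambda_half \<epsilon>) f"
  shows "set_integrable lborel Lambda (\<lambda>z. f (branch \<epsilon> z) * branch_jacobian (fst z) (snd z))"
    "(LINT z:Lambda|lborel. f (branch \<epsilon> z) * branch_jacobian (fst z) (snd z)) = (LINT z:Lambda_half \<epsilon>|lborel. f z)"
proof -
  let ?G = "\<lambda>z. f (branch \<epsilon> z) * branch_jacobian (fst z) (snd z)"
  note F = set_integral_vec_of_pair_image[OF f]
  have "(\<lambda>w. f (pair_of_vec w)) absolutely_integrable_on vec_of_pair ` Lambda_half \<epsilon>"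
    using F(1) unfolding set_integrable_def
    by (subst integrable_completion) (auto dest: borel_measurable_integrable)
  moreover have "integral (vec_of_pair ` Lambda_half \<epsilon>) (\<lambda>w. f (pair_of_vec w)) = (LINT z:Lambda_half \<epsilon>|lborel. f z)"
    using set_borel_integral_eq_integral(2)[OF F(1)] F(2) by simp
  moreover have "(\<lambda>w. branch_jacobian (w$1) (w$2) * f (pair_of_vec (branch_vec \<epsilon> w))) = (\<lambda>w. ?G (pair_of_vec w))"
    by (simp add: fun_eq_iff branch_vec_def pair_of_vec_def)
  ultimately have G: "(\<lambda>w. ?G (pair_of_vec w)) absolutely_integrable_on vec_of_pair ` Lambda"
    "integral (vec_of_pair ` Lambda) (\<lambda>w. ?G (pair_of_vec w)) = (LINT z:Lambda_half \<epsilon>|lborel. f z)"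
    using branch_change_of_variables[OF \<epsilon>, of "\<lambda>w. f (pair_of_vec w)"] by metis+
  have "(\<lambda>z. indicator Lambda z * ?G z) = (\<lambda>z. indicator Lambda z *
      ((\<lambda>y. indicator (Lambda_half \<epsilon>) y * f y) (branch \<epsilon> z) * branch_jacobian (fst z) (snd z)))"
    using branch_mem_Lambda_half[OF \<epsilon>] by (auto simp: fun_eq_iff indicator_def)
  moreover have "(\<lambda>y. indicator (Lambda_half \<epsilon>) y * f y) \<in> borel_measurable borel"
    using f unfolding set_integrable_def by (auto dest: borel_measurable_integrable)
  ultimately have "(\<lambda>z. indicator Lambda z * ?G z) \<in> borel_measurable borel" by simp
  then have "(\<lambda>w. indicator (vec_of_pair ` Lambda) w * ?G (pair_of_vec w)) \<in> borel_measurable borel"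
    by (simp add: indicator_def mem_vec_of_pair_image)
  then have "set_integrable lborel (vec_of_pair ` Lambda) (\<lambda>w. ?G (pair_of_vec w))"
    using G(1) unfolding set_integrable_def by (subst (asm) integrable_completion) auto
  from set_integral_from_vec_of_pair_image[OF this] G(2) set_borel_integral_eq_integral(2)[OF this]
  show "set_integrable lborel Lambda ?G" "(LINT z:Lambda|lborel. ?G z) = (LINT z:Lambda_half \<epsilon>|lborel. f z)"
    by (simp_all only: pair_of_vec_of_pair)
qed

lemma antidiagonal_null: "{z::real \<times> real. fst z + snd z = 0} \<in> null_sets lborel"
proof -
  have eq: "{z::real \<times> real. fst z + snd z = 0} = {z. (1, 1) \<bullet> z = 0}" by (auto simp: inner_prod_def)
  have "negligible {z::real \<times> real. (1, 1) \<bullet> z = 0}"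
    by (rule negligible_hyperplane) (simp add: zero_prod_def)
  then have "{z::real \<times> real. fst z + snd z = 0} \<in> null_sets lebesgue"
    unfolding eq negligible_iff_null_sets .
  moreover have "closed {z::real \<times> real. fst z + snd z = 0}"
    by (intro closed_Collect_eq continuous_intros)
  ultimately show ?thesis using null_sets_completion_iff by (metis borel_closed sets_lborel)
qed

lemma set_integral_Lambda_branches:
  fixes f :: "real \<times> real \<Rightarrow> real"
  assumes f: "set_integrable lborel Lambda f"
  shows "(LINT z:Lambda|lborel. f z) =
    (LINT z:Lambda|lborel. (f (branch 1 z) + f (branch (-1) z)) * branch_jacobian (fst z) (snd z))"
proof -
  have f1: "set_integrable lborel (Lambda_half 1) f" and f2: "set_integrable lborel (Lambda_half (-1)) f"
    using set_integrable_subset[OF f _ Lambda_half_subset] by auto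
  have "(LINT z:Lambda|lborel. f z) = (LINT z:Lambda_half 1 \<union> Lambda_half (-1)|lborel. f z)"
  proof (rule set_integral_cong_set)
    show "set_borel_measurable lborel (Lambda_half 1 \<union> Lambda_half (-1)) f"
      using set_integrable_Un[OF f1 f2]
      by (auto simp: set_borel_measurable_def set_integrable_def dest: borel_measurable_integrable)
    show "set_borel_measurable lborel Lambda f"
      using f by (auto simp: set_borel_measurable_def set_integrable_def dest: borel_measurable_integrable)
    show "AE z in lborel. (z \<in> Lambda_half 1 \<union> Lambda_half (-1)) = (z \<in> Lambda)"
      by (rule AE_I'[OF antidiagonal_null]) (auto simp: Lambda_half_def)
  qed
  also have "\<dots> = (LINT z:Lambda_half 1|lborel. f z) + (LINT z:Lambda_half (-1)|lborel. f z)"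
    by (rule set_integral_Un[OF _ f1 f2]) (auto simp: Lambda_half_def)
  also have "\<dots> = (LINT z:Lambda|lborel. f (branch 1 z) * branch_jacobian (fst z) (snd z))
      + (LINT z:Lambda|lborel. f (branch (-1) z) * branch_jacobian (fst z) (snd z))"
    using set_integral_branch(2)[of 1 f] set_integral_branch(2)[of "-1" f] f1 f2 by simp
  also have "\<dots> = (LINT z:Lambda|lborel. (f (branch 1 z) + f (branch (-1) z)) * branch_jacobian (fst z) (snd z))"
    using set_integral_add(2)[OF set_integral_branch(1)[of 1 f] set_integral_branch(1)[of "-1" f]] f1 f2
    by (simp add: distrib_right)
  finally show ?thesis .
qed

section \<open>Spans of symmetric monomials and leading terms\<close>

lemma sym_mono_swap: "sym_mono a b x y = sym_mono b a x y"
  by (simp add: sym_mono_def)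

lemma sym_mono_mult:
  "sym_mono a b x y * sym_mono c d x y = sym_mono (a + c) (b + d) x y + sym_mono (a + d) (b + c) x y"
  by (simp add: sym_mono_def power_add algebra_simps)

lemma sym_mono_neg_swap: "sym_mono a b (-y) (-x) = (-1) ^ (a + b) * sym_mono a b x y"
  by (simp add: sym_mono_def power_minus[of x] power_minus[of y] power_add algebra_simps)

inductive sym_span :: "(nat \<times> nat \<Rightarrow> bool) \<Rightarrow> (real \<Rightarrow> real \<Rightarrow> real) \<Rightarrow> bool" for G where
  sym_span_zero: "sym_span G (\<lambda>x y. 0)"
| sym_span_term: "G (a, b) \<Longrightarrow> sym_span G (\<lambda>x y. c * sym_mono a b x y)"
| sym_span_add: "sym_span G f \<Longrightarrow> sym_span G g \<Longrightarrow> sym_span G (\<lambda>x y. f x y + g x y)"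

abbreviation sym_poly :: "(real \<Rightarrow> real \<Rightarrow> real) \<Rightarrow> bool" where
  "sym_poly \<equiv> sym_span (\<lambda>_. True)"

lemma sym_span_mono: "sym_span G f \<Longrightarrow> (\<And>p. G p \<Longrightarrow> G' p) \<Longrightarrow> sym_span G' f"
  by (induction rule: sym_span.induct) (auto intro: sym_span.intros)

lemma sym_span_sym_poly: "sym_span G f \<Longrightarrow> sym_poly f"
  by (erule sym_span_mono) simp

lemma sym_poly_sym_mono: "sym_poly (sym_mono a b)"
  using sym_span_term[of "\<lambda>_. True" a b 1] by simp

lemma sym_span_cong: "sym_span G f \<Longrightarrow> (\<And>x y. g x y = f x y) \<Longrightarrow> sym_span G g"
proof -
  assume "sym_span G f" "\<And>x y. g x y = f x y"
  then have "g = f" by (auto simp: fun_eq_iff)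
  with \<open>sym_span G f\<close> show ?thesis by simp
qed

lemma sym_span_scale: "sym_span G f \<Longrightarrow> sym_span G (\<lambda>x y. c * f x y)"
proof (induction rule: sym_span.induct)
  case sym_span_zero
  then show ?case by (simp add: sym_span.sym_span_zero)
next
  case (sym_span_term a b d)
  then show ?case using sym_span.sym_span_term[of G a b "c * d"] by (simp add: mult.assoc)
next
  case (sym_span_add f g)
  then show ?case using sym_span.sym_span_add[OF sym_span_add.IH] by (simp add: distrib_left)
qed

lemma sym_span_diff: "sym_span G f \<Longrightarrow> sym_span G g \<Longrightarrow> sym_span G (\<lambda>x y. f x y - g x y)"
  using sym_span_add[OF _ sym_span_scale[of G g "-1"]] by (rule sym_span_cong) simp_all

lemma sym_span_sum:
  "finite A \<Longrightarrow> (\<And>i. i \<in> A \<Longrightarrow> sym_span G (F i)) \<Longrightarrow> sym_span G (\<lambda>x y. \<Sum>i\<in>A. F i x y)"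
proof (induction rule: finite_induct)
  case empty
  then show ?case by (simp add: sym_span_zero)
next
  case (insert i A)
  then show ?case using sym_span_add[of G "F i" "\<lambda>x y. \<Sum>i\<in>A. F i x y"] by simp
qed

lemma sym_span_mult_term:
  assumes "sym_span G2 g"
    and H: "\<And>c d. G2 (c, d) \<Longrightarrow> G3 (a + c, b + d) \<and> G3 (a + d, b + c)"
  shows "sym_span G3 (\<lambda>x y. (k * sym_mono a b x y) * g x y)"
  using assms(1)
proof (induction rule: sym_span.induct)
  case sym_span_zero
  then show ?case by (simp add: sym_span.sym_span_zero)
next
  case (sym_span_term c d e)
  have "sym_span G3 (\<lambda>x y. (k * e) * sym_mono (a + c) (b + d) x y + (k * e) * sym_mono (a + d) (b + c) x y)"
    using H[OF sym_span_term] by (auto intro!: sym_span.intros)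
  moreover have "k * sym_mono a b x y * (e * sym_mono c d x y) = (k * e) * (sym_mono a b x y * sym_mono c d x y)"
    for x y by (simp add: ac_simps)
  ultimately show ?case by (elim sym_span_cong) (simp add: sym_mono_mult distrib_left)
next
  case (sym_span_add f g)
  then show ?case
    using sym_span.sym_span_add[OF sym_span_add.IH] by (rule_tac sym_span_cong) (simp_all add: distrib_left)
qed

lemma sym_span_mult:
  assumes "sym_span G1 f" "sym_span G2 g"
    and H: "\<And>a b c d. G1 (a, b) \<Longrightarrow> G2 (c, d) \<Longrightarrow> G3 (a + c, b + d) \<and> G3 (a + d, b + c)"
  shows "sym_span G3 (\<lambda>x y. f x y * g x y)"
  using assms(1)
proof (induction rule: sym_span.induct)
  case sym_span_zero
  then show ?case by (simp add: sym_span.sym_span_zero)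
next
  case (sym_span_term a b c)
  show ?case by (rule sym_span_mult_term[OF assms(2)]) (rule H[OF sym_span_term])
next
  case (sym_span_add f1 f2)
  then show ?case
    using sym_span.sym_span_add[OF sym_span_add.IH] by (rule_tac sym_span_cong) (simp_all add: distrib_right)
qed

lemma sym_poly_mult: "sym_poly f \<Longrightarrow> sym_poly g \<Longrightarrow> sym_poly (\<lambda>x y. f x y * g x y)"
  by (rule sym_span_mult) auto

lemma sym_span_continuous: "sym_span G f \<Longrightarrow> continuous_on UNIV (\<lambda>z. f (fst z) (snd z))"
  by (induction rule: sym_span.induct) (auto simp: sym_mono_def intro!: continuous_intros)

definition dom_below :: "nat \<Rightarrow> nat \<Rightarrow> nat \<times> nat \<Rightarrow> bool" where
  "dom_below N K p \<longleftrightarrow> max (fst p) (snd p) \<le> N \<and> fst p + snd p \<le> N + K"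

definition dom_strictly_below :: "nat \<Rightarrow> nat \<Rightarrow> nat \<times> nat \<Rightarrow> bool" where
  "dom_strictly_below N K p \<longleftrightarrow>
     dom_below N K p \<and> \<not> (max (fst p) (snd p) = N \<and> fst p + snd p = N + K)"

definition dom_below_par :: "nat \<Rightarrow> nat \<Rightarrow> nat \<times> nat \<Rightarrow> bool" where
  "dom_below_par N K p \<longleftrightarrow> dom_below N K p \<and> even (fst p + snd p + N + K)"

definition dom_strictly_below_par :: "nat \<Rightarrow> nat \<Rightarrow> nat \<times> nat \<Rightarrow> bool" where
  "dom_strictly_below_par N K p \<longleftrightarrow> dom_strictly_below N K p \<and> even (fst p + snd p + N + K)"

lemma dom_strictly_below_par_imp: "dom_strictly_below_par N K p \<Longrightarrow> dom_below_par N K p"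
  by (simp add: dom_strictly_below_par_def dom_below_par_def dom_strictly_below_def)

lemma dom_strictly_below_add:
  fixes a b c d :: nat
  assumes "dom_strictly_below N1 K1 (a, b)" "dom_below N2 K2 (c, d)"
  shows "dom_strictly_below (N1 + N2) (K1 + K2) (a + c, b + d)"
    and "dom_strictly_below (N1 + N2) (K1 + K2) (a + d, b + c)"
  using assms unfolding dom_strictly_below_def dom_below_def fst_conv snd_conv
  by (simp add: max_def split: if_splits; linarith)+

lemma dom_strictly_below_par_add:
  assumes "dom_strictly_below_par N1 K1 (a, b)" "dom_below_par N2 K2 (c, d)"
  shows "dom_strictly_below_par (N1 + N2) (K1 + K2) (a + c, b + d)"
    and "dom_strictly_below_par (N1 + N2) (K1 + K2) (a + d, b + c)"
proof -
  have "even (a + b + N1 + K1)" "even (c + d + N2 + K2)"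
    using assms by (simp_all add: dom_strictly_below_par_def dom_below_par_def)
  then have par: "even (a + c + (b + d) + (N1 + N2) + (K1 + K2))" "even (a + d + (b + c) + (N1 + N2) + (K1 + K2))"
    by presburger+
  have "dom_strictly_below N1 K1 (a, b)" "dom_below N2 K2 (c, d)"
    using assms by (simp_all add: dom_strictly_below_par_def dom_below_par_def)
  note strict = dom_strictly_below_add[OF this]
  show "dom_strictly_below_par (N1 + N2) (K1 + K2) (a + c, b + d)"
    "dom_strictly_below_par (N1 + N2) (K1 + K2) (a + d, b + c)"
    unfolding dom_strictly_below_par_def fst_conv snd_conv using par strict by blast+
qed

lemma dom_strictly_below_par_swap: "dom_strictly_below_par N K (a, b) \<longleftrightarrow> dom_strictly_below_par N K (b, a)"
  by (auto simp: dom_strictly_below_par_def dom_strictly_below_def dom_below_def max_def add.commute)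

lemma dom_below_par_self: "K \<le> N \<Longrightarrow> dom_below_par N K (N, K)"
  by (simp add: dom_below_par_def dom_below_def) presburger

definition has_leading :: "nat \<Rightarrow> nat \<Rightarrow> (real \<Rightarrow> real \<Rightarrow> real) \<Rightarrow> bool" where
  "has_leading N K f \<longleftrightarrow> (\<exists>c g. c \<noteq> 0 \<and> sym_span (dom_strictly_below_par N K) g
     \<and> (\<forall>x y. f x y = c * sym_mono N K x y + g x y))"

lemma has_leading_cong: "has_leading N K f \<Longrightarrow> (\<And>x y. h x y = f x y) \<Longrightarrow> has_leading N K h"
  unfolding has_leading_def by auto

lemma has_leading_diff:
  assumes "has_leading N K f" "sym_span (dom_strictly_below_par N K) h"
  shows "has_leading N K (\<lambda>x y. f x y - h x y)"
proof -
  obtain c g where "c \<noteq> 0" "sym_span (dom_strictly_below_par N K) g" "\<And>x y. f x y = c * sym_mono N K x y + g x y"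
    using assms(1) unfolding has_leading_def by blast
  with sym_span_diff[OF _ assms(2)] show ?thesis
    unfolding has_leading_def by (intro exI[of _ c] exI[of _ "\<lambda>x y. g x y - h x y"]) auto
qed

lemma has_leading_imp_sym_span:
  assumes "has_leading N K f" "\<And>p. dom_strictly_below_par N K p \<Longrightarrow> G p" "G (N, K)"
  shows "sym_span G f"
proof -
  obtain c g where cg: "sym_span (dom_strictly_below_par N K) g" "\<And>x y. f x y = c * sym_mono N K x y + g x y"
    using assms(1) unfolding has_leading_def by blast
  have "sym_span G (\<lambda>x y. c * sym_mono N K x y + g x y)"
    by (intro sym_span_add sym_span_term assms(3) sym_span_mono[OF cg(1)] assms(2))
  then show ?thesis by (rule sym_span_cong) (simp add: cg)
qed

lemma has_leading_imp_sym_span_below: "has_leading N K f \<Longrightarrow> K \<le> N \<Longrightarrow> sym_span (dom_below_par N K) f"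
  by (erule has_leading_imp_sym_span) (simp_all add: dom_strictly_below_par_imp dom_below_par_self)

lemma has_leading_mult:
  assumes K: "K1 \<le> N1" "K2 \<le> N2" and f: "has_leading N1 K1 f" and g: "has_leading N2 K2 g"
  shows "has_leading (N1 + N2) (K1 + K2) (\<lambda>x y. f x y * g x y)"
proof -
  let ?G = "dom_strictly_below_par (N1 + N2) (K1 + K2)"
  obtain c1 f1 where 1: "c1 \<noteq> 0" "sym_span (dom_strictly_below_par N1 K1) f1"
      "\<And>x y. f x y = c1 * sym_mono N1 K1 x y + f1 x y"
    using f unfolding has_leading_def by blast
  obtain c2 g2 where 2: "c2 \<noteq> 0" "sym_span (dom_strictly_below_par N2 K2) g2"
      "\<And>x y. g x y = c2 * sym_mono N2 K2 x y + g2 x y"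
    using g unfolding has_leading_def by blast
  have lower1: "sym_span ?G (\<lambda>x y. (c1 * sym_mono N1 K1 x y) * g2 x y)"
  proof (rule sym_span_mult_term[OF 2(2)])
    fix c d assume "dom_strictly_below_par N2 K2 (c, d)"
    from dom_strictly_below_par_add[OF this dom_below_par_self[OF K(1)]]
    show "?G (N1 + c, K1 + d) \<and> ?G (N1 + d, K1 + c)"
      by (simp add: add.commute dom_strictly_below_par_swap[of _ _ "N1 + d"])
  qed
  have lower2: "sym_span ?G (\<lambda>x y. f1 x y * g x y)"
    using dom_strictly_below_par_add
    by (intro sym_span_mult[OF 1(2) has_leading_imp_sym_span_below[OF g K(2)]]) blast
  have fg: "f x y * g x y = (c1 * c2) * sym_mono (N1 + N2) (K1 + K2) x y
      + (c1 * c2) * sym_mono (N1 + K2) (K1 + N2) x y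
      + (c1 * sym_mono N1 K1 x y * g2 x y + f1 x y * g x y)" for x y
    using sym_mono_mult[of N1 K1 x y N2 K2] by (simp add: 1(3) 2(3) algebra_simps)
  show ?thesis
  proof (cases "?G (N1 + K2, K1 + N2)")
    case True
    then have "sym_span ?G (\<lambda>x y. (c1 * c2) * sym_mono (N1 + K2) (K1 + N2) x y
        + (c1 * sym_mono N1 K1 x y * g2 x y + f1 x y * g x y))"
      by (intro sym_span_add sym_span_term lower1 lower2)
    then show ?thesis
      unfolding has_leading_def using 1(1) 2(1) fg by (intro exI[of _ "c1 * c2"]) (auto simp: add.assoc)
  next
    case False
    \<comment> \<open>then \<open>(N1 + K2, K1 + N2)\<close> is a permutation of \<open>(N1 + N2, K1 + K2)\<close>\<close>
    have "even (N1 + K2 + (K1 + N2) + (N1 + N2) + (K1 + K2))" by presburger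
    moreover have "dom_below (N1 + N2) (K1 + K2) (N1 + K2, K1 + N2)"
      using K by (simp add: dom_below_def)
    ultimately have "max (N1 + K2) (K1 + N2) = N1 + N2"
      using False unfolding dom_strictly_below_par_def dom_strictly_below_def fst_conv snd_conv by blast
    then have "sym_mono (N1 + K2) (K1 + N2) x y = sym_mono (N1 + N2) (K1 + K2) x y" for x y
      using K by (auto simp: max_def sym_mono_swap split: if_splits)
    moreover have "sym_span ?G (\<lambda>x y. c1 * sym_mono N1 K1 x y * g2 x y + f1 x y * g x y)"
      by (intro sym_span_add lower1 lower2)
    ultimately show ?thesis
      unfolding has_leading_def using 1(1) 2(1) fg by (intro exI[of _ "2 * (c1 * c2)"]) auto
  qed
qed

lemma has_leading_one: "has_leading 0 0 (\<lambda>x y. 1)"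
  unfolding has_leading_def
  by (intro exI[of _ "1/2"] exI[of _ "\<lambda>x y. 0"]) (auto simp: sym_mono_def sym_span_zero)

lemma has_leading_x_plus_y: "has_leading 1 0 (\<lambda>x y. x + y)"
  unfolding has_leading_def
  by (intro exI[of _ 1] exI[of _ "\<lambda>x y. 0"]) (auto simp: sym_mono_def sym_span_zero)

lemma has_leading_xy: "has_leading 1 1 (\<lambda>x y. 2 * x * y)"
  unfolding has_leading_def
  by (intro exI[of _ 1] exI[of _ "\<lambda>x y. 0"]) (auto simp: sym_mono_def sym_span_zero)

lemma has_leading_sum_squares: "has_leading 2 0 (\<lambda>x y. x\<^sup>2 + y\<^sup>2 - 1)"
proof -
  have "dom_strictly_below_par 2 0 (0, 0)"
    by (simp add: dom_strictly_below_par_def dom_strictly_below_def dom_below_def)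
  then have "sym_span (dom_strictly_below_par 2 0) (\<lambda>x y. (-1/2) * sym_mono 0 0 x y)"
    by (rule sym_span_term)
  then show ?thesis
    unfolding has_leading_def by (intro exI[of _ 1] exI[of _ "\<lambda>x y. (-1/2) * sym_mono 0 0 x y"])
      (auto simp: sym_mono_def)
qed

lemma has_leading_sum_squares_power: "has_leading (2 * l) 0 (\<lambda>x y. (x\<^sup>2 + y\<^sup>2 - 1) ^ l)"
proof (induction l)
  case 0
  then show ?case using has_leading_one by simp
next
  case (Suc l)
  from has_leading_mult[OF _ _ has_leading_sum_squares Suc] show ?case by simp
qed

section \<open>Pulling back symmetric monomials\<close>

fun newton_power_sum :: "nat \<Rightarrow> real \<Rightarrow> real \<Rightarrow> real" where
  "newton_power_sum 0 s p = 2"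
| "newton_power_sum (Suc 0) s p = s"
| "newton_power_sum (Suc (Suc j)) s p = s * newton_power_sum (Suc j) s p - p * newton_power_sum j s p"

lemma newton_power_sum_eq: "newton_power_sum j (u + v) (u * v) = u ^ j + v ^ j"
proof -
  have "s = u + v \<Longrightarrow> p = u * v \<Longrightarrow> newton_power_sum j s p = u ^ j + v ^ j" for s p
    by (induction j s p rule: newton_power_sum.induct) (auto simp: algebra_simps)
  then show ?thesis by simp
qed

lemma has_leading_newton_power_sum:
  "has_leading j j (\<lambda>x y. newton_power_sum j (2 * x * y) (x\<^sup>2 + y\<^sup>2 - 1))"
proof (induction j rule: less_induct)
  case (less j)
  consider "j = 0" | "j = 1" | i where "j = Suc (Suc i)"
    by (metis One_nat_def not0_implies_Suc)
  then show ?case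
  proof cases
    case 1
    then show ?thesis unfolding has_leading_def
      by (intro exI[of _ 1] exI[of _ "\<lambda>x y. 0"]) (auto simp: sym_mono_def sym_span_zero)
  next
    case 2
    then show ?thesis unfolding has_leading_def
      by (intro exI[of _ 1] exI[of _ "\<lambda>x y. 0"]) (auto simp: sym_mono_def sym_span_zero)
  next
    case 3
    have "has_leading (1 + Suc i) (1 + Suc i)
        (\<lambda>x y. 2 * x * y * newton_power_sum (Suc i) (2 * x * y) (x\<^sup>2 + y\<^sup>2 - 1))"
      using 3 by (intro has_leading_mult has_leading_xy less) auto
    moreover have "has_leading (2 + i) (0 + i)
        (\<lambda>x y. (x\<^sup>2 + y\<^sup>2 - 1) * newton_power_sum i (2 * x * y) (x\<^sup>2 + y\<^sup>2 - 1))"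
      using 3 by (intro has_leading_mult has_leading_sum_squares less) auto
    then have "sym_span (dom_strictly_below_par j j)
        (\<lambda>x y. (x\<^sup>2 + y\<^sup>2 - 1) * newton_power_sum i (2 * x * y) (x\<^sup>2 + y\<^sup>2 - 1))"
      by (rule has_leading_imp_sym_span)
        (use 3 in \<open>auto simp: dom_strictly_below_par_def dom_strictly_below_def dom_below_def\<close>)
    ultimately show ?thesis
      using 3 by (auto intro: has_leading_cong[OF has_leading_diff])
  qed
qed

definition pullback_mono :: "nat \<Rightarrow> nat \<Rightarrow> nat \<Rightarrow> real \<Rightarrow> real \<Rightarrow> real" where
  "pullback_mono r m l x y =
     (x + y) ^ r * ((x\<^sup>2 + y\<^sup>2 - 1) ^ l * newton_power_sum (m - l) (2 * x * y) (x\<^sup>2 + y\<^sup>2 - 1))"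

lemma pullback_mono_eq:
  assumes "\<bar>x\<bar> \<le> 1" "\<bar>y\<bar> \<le> 1" "l \<le> m"
  shows "pullback_mono r m l x y = (x + y) ^ r * sym_mono m l (xplus x y) (xminus x y)"
proof -
  obtain j where m: "m = l + j" using assms(3) le_Suc_ex by blast
  have "sym_mono m l u v = (u * v) ^ l * newton_power_sum j (u + v) (u * v)" for u v :: real
    unfolding m sym_mono_def newton_power_sum_eq by (simp add: power_add power_mult_distrib algebra_simps)
  then show ?thesis
    by (simp add: pullback_mono_def m xplus_add_xminus[OF assms(1,2)] xplus_mult_xminus[OF assms(1,2)])
qed

lemma has_leading_pullback_mono:
  assumes "l \<le> m" "r \<le> 1"
  shows "has_leading (m + l + r) (m - l) (pullback_mono r m l)"
proof -
  have r: "has_leading r 0 (\<lambda>x y. (x + y) ^ r)"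
    using assms(2) has_leading_one has_leading_x_plus_y by (cases r) auto
  have "has_leading (2 * l + (m - l)) (0 + (m - l))
      (\<lambda>x y. (x\<^sup>2 + y\<^sup>2 - 1) ^ l * newton_power_sum (m - l) (2 * x * y) (x\<^sup>2 + y\<^sup>2 - 1))"
    by (rule has_leading_mult[OF _ _ has_leading_sum_squares_power has_leading_newton_power_sum]) auto
  from has_leading_mult[OF _ _ r this]
  have "has_leading (r + (2 * l + (m - l))) (0 + (0 + (m - l))) (pullback_mono r m l)"
    unfolding pullback_mono_def by simp
  moreover have "r + (2 * l + (m - l)) = m + l + r" using assms(1) by simp
  ultimately show ?thesis by (simp only: add_0_left)
qed

lemma div2_add_div2_diff: "q \<le> (p::nat) \<Longrightarrow> (p + q) div 2 + (p - q) div 2 + (p + q) mod 2 = p"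
  by presburger

definition pullback_span :: "nat \<Rightarrow> (nat \<times> nat \<Rightarrow> bool) \<Rightarrow> (real \<Rightarrow> real \<Rightarrow> real) \<Rightarrow> bool" where
  "pullback_span r G g \<longleftrightarrow> (\<exists>H. sym_span G H \<and>
     (\<forall>x y. \<bar>x\<bar> \<le> 1 \<longrightarrow> \<bar>y\<bar> \<le> 1 \<longrightarrow> g x y = (x + y) ^ r * H (xplus x y) (xminus x y)))"

lemma pullback_span_mono: "pullback_span r G g \<Longrightarrow> (\<And>p. G p \<Longrightarrow> G' p) \<Longrightarrow> pullback_span r G' g"
  unfolding pullback_span_def using sym_span_mono by blast

lemma pullback_span_sym_span:
  assumes "sym_span G g" and gen: "\<And>a b. G (a, b) \<Longrightarrow> pullback_span r H (sym_mono a b)"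
  shows "pullback_span r H g"
  using assms(1)
proof (induction rule: sym_span.induct)
  case sym_span_zero
  then show ?case unfolding pullback_span_def by (intro exI[of _ "\<lambda>x y. 0"]) (simp add: sym_span.sym_span_zero)
next
  case (sym_span_term a b c)
  then obtain F where "sym_span H F"
      "\<forall>x y. \<bar>x\<bar> \<le> 1 \<longrightarrow> \<bar>y\<bar> \<le> 1 \<longrightarrow> sym_mono a b x y = (x + y) ^ r * F (xplus x y) (xminus x y)"
    using gen unfolding pullback_span_def by blast
  then show ?case
    unfolding pullback_span_def by (intro exI[of _ "\<lambda>x y. c * F x y"]) (auto intro: sym_span_scale)
next
  case (sym_span_add f g)
  then obtain F1 F2 where "sym_span H F1" "sym_span H F2"
      "\<forall>x y. \<bar>x\<bar> \<le> 1 \<longrightarrow> \<bar>y\<bar> \<le> 1 \<longrightarrow> f x y = (x + y) ^ r * F1 (xplus x y) (xminus x y)"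
      "\<forall>x y. \<bar>x\<bar> \<le> 1 \<longrightarrow> \<bar>y\<bar> \<le> 1 \<longrightarrow> g x y = (x + y) ^ r * F2 (xplus x y) (xminus x y)"
    unfolding pullback_span_def by blast
  then show ?case unfolding pullback_span_def
    by (intro exI[of _ "\<lambda>x y. F1 x y + F2 x y"]) (auto intro: sym_span.sym_span_add simp: distrib_left)
qed

text \<open>Triangularity: the index \<open>(a, b)\<close> with \<open>a + b = 2 m + r\<close> and \<open>a - b = 2 l + r\<close> is the leading
  index of \<open>pullback_mono r m l\<close>, so \<open>sym_mono a b\<close> is \<open>pullback_mono r m l\<close> minus lower terms,
  which are handled by induction on \<open>2 a + b\<close>.\<close>

lemma sym_mono_pullback_span:
  "b \<le> a \<Longrightarrow> pullback_span ((a + b) mod 2) (dom_below ((a + b) div 2) ((a - b) div 2)) (sym_mono a b)"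
proof (induction "2 * a + b" arbitrary: a b rule: less_induct)
  case less
  define r m l where "r = (a + b) mod 2" and "m = (a + b) div 2" and "l = (a - b) div 2"
  have lm: "l \<le> m" "r \<le> 1" unfolding l_def m_def r_def by (simp_all add: div_le_mono)
  have "m + l + r = a" "a + b = 2 * m + r"
    using div2_add_div2_diff[OF less.prems] unfolding r_def m_def l_def by simp_all
  then have idx: "m + l + r = a" "m - l = b" by linarith+
  obtain c g where cg: "c \<noteq> 0" "sym_span (dom_strictly_below_par a b) g"
      "\<And>x y. pullback_mono r m l x y = c * sym_mono a b x y + g x y"
    using has_leading_pullback_mono[OF lm] unfolding idx has_leading_def by blast
  have "pullback_span r (dom_below m l) g"
  proof (rule pullback_span_sym_span[OF cg(2)])
    fix p q assume pq: "dom_strictly_below_par a b (p, q)"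
    define p' q' where "p' = max p q" and "q' = min p q"
    have sw: "sym_mono p q = sym_mono p' q'"
      by (auto simp: fun_eq_iff p'_def q'_def max_def min_def sym_mono_swap)
    have lw: "p' \<le> a" "p' + q' \<le> a + b" "\<not> (p' = a \<and> p' + q' = a + b)" "even (p' + q' + a + b)" "q' \<le> p'"
      using pq unfolding dom_strictly_below_par_def dom_strictly_below_def dom_below_def p'_def q'_def
      by (auto simp: max_def min_def)
    then have "2 * p' + q' < 2 * a + b" by linarith
    moreover have par: "(p' + q') mod 2 = r" using lw(4) unfolding r_def by presburger
    ultimately have "pullback_span r (dom_below ((p' + q') div 2) ((p' - q') div 2)) (sym_mono p' q')"
      using less.hyps lw(5) by metis
    then show "pullback_span r (dom_below m l) (sym_mono p q)"
      unfolding sw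
    proof (rule pullback_span_mono)
      fix z assume "dom_below ((p' + q') div 2) ((p' - q') div 2) z"
      moreover have "(p' + q') div 2 \<le> m" using lw(2) unfolding m_def by (simp add: div_le_mono)
      moreover have "(p' + q') div 2 + (p' - q') div 2 \<le> m + l"
        using div2_add_div2_diff[OF lw(5)] \<open>m + l + r = a\<close> par lw(1) by linarith
      ultimately show "dom_below m l z" unfolding dom_below_def by linarith
    qed
  qed
  then obtain H where H: "sym_span (dom_below m l) H"
      "\<forall>x y. \<bar>x\<bar> \<le> 1 \<longrightarrow> \<bar>y\<bar> \<le> 1 \<longrightarrow> g x y = (x + y) ^ r * H (xplus x y) (xminus x y)"
    unfolding pullback_span_def by blast
  have "sym_span (dom_below m l) (\<lambda>x y. (1 / c) * sym_mono m l x y + (- 1 / c) * H x y)"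
    using lm by (intro sym_span_add sym_span_term sym_span_scale H(1)) (simp add: dom_below_def)
  moreover have "sym_mono a b x y
      = (x + y) ^ r * ((1 / c) * sym_mono m l (xplus x y) (xminus x y) + (- 1 / c) * H (xplus x y) (xminus x y))"
    if "\<bar>x\<bar> \<le> 1" "\<bar>y\<bar> \<le> 1" for x y
  proof -
    have "c * sym_mono a b x y = pullback_mono r m l x y - g x y" using cg(3)[of x y] by simp
    also have "\<dots> = (x + y) ^ r * sym_mono m l (xplus x y) (xminus x y) - (x + y) ^ r * H (xplus x y) (xminus x y)"
      using pullback_mono_eq[OF that lm(1)] H(2) that by simp
    finally show ?thesis using cg(1) by (simp add: field_simps)
  qed
  ultimately show ?case unfolding pullback_span_def r_def m_def l_def by blast
qed

section \<open>Orthogonality and uniqueness\<close>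

lemma set_integrable_sym_span:
  assumes w: "moments_finite w" and f: "sym_span G f"
  shows "set_integrable lborel Lambda (\<lambda>z. f (fst z) (snd z) * w (fst z) (snd z))"
  using f
proof (induction rule: sym_span.induct)
  case sym_span_zero
  then show ?case by (simp add: set_integrable_def)
next
  case (sym_span_term a b c)
  have "set_integrable lborel Lambda (\<lambda>z. fst z ^ a * snd z ^ b * w (fst z) (snd z))"
    "set_integrable lborel Lambda (\<lambda>z. fst z ^ b * snd z ^ a * w (fst z) (snd z))"
    using w unfolding moments_finite_def by blast+
  from set_integrable_mult_right[OF set_integral_add(1)[OF this], of c]
  show ?case by (simp add: sym_mono_def algebra_simps)
next
  case (sym_span_add f g)
  then show ?case using set_integral_add(1)[OF sym_span_add.IH] by (simp add: distrib_right)
qed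

lemma orthogonal_sym_span:
  assumes w: "moments_finite w" and F: "sym_poly F"
    and orth: "\<And>a b. G (a, b) \<Longrightarrow>
      (LINT z:Lambda|lborel. F (fst z) (snd z) * sym_mono a b (fst z) (snd z) * w (fst z) (snd z)) = 0"
    and g: "sym_span G g"
  shows "(LINT z:Lambda|lborel. F (fst z) (snd z) * g (fst z) (snd z) * w (fst z) (snd z)) = 0"
  using g
proof (induction rule: sym_span.induct)
  case sym_span_zero
  then show ?case by simp
next
  case (sym_span_term a b c)
  have "(\<lambda>z. F (fst z) (snd z) * (c * sym_mono a b (fst z) (snd z)) * w (fst z) (snd z))
      = (\<lambda>z. c * (F (fst z) (snd z) * sym_mono a b (fst z) (snd z) * w (fst z) (snd z)))"
    by (simp add: fun_eq_iff ac_simps)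
  then show ?case using orth[OF sym_span_term] by simp
next
  case (sym_span_add f g)
  have "set_integrable lborel Lambda (\<lambda>z. F (fst z) (snd z) * f (fst z) (snd z) * w (fst z) (snd z))"
    "set_integrable lborel Lambda (\<lambda>z. F (fst z) (snd z) * g (fst z) (snd z) * w (fst z) (snd z))"
    using set_integrable_sym_span[OF w sym_poly_mult[OF F sym_span_sym_poly[OF sym_span_add(1)]]]
      set_integrable_sym_span[OF w sym_poly_mult[OF F sym_span_sym_poly[OF sym_span_add(2)]]]
    by simp_all
  with sym_span_add.IH show ?case by (simp add: distrib_left distrib_right set_integral_add(2))
qed

definition dom_index_set :: "nat \<Rightarrow> nat \<Rightarrow> (nat \<times> nat) set" where
  "dom_index_set n k = {(m, l). l \<le> m \<and> dom_le (m, l) (n, k)}"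

lemma finite_dom_index_set: "finite (dom_index_set n k)"
proof -
  have "dom_index_set n k \<subseteq> {..n} \<times> {..n}" by (auto simp: dom_index_set_def dom_le_def)
  then show ?thesis by (rule finite_subset) auto
qed

lemma dominance_orthogonal_expansion:
  assumes "dominance_orthogonal w P" "k \<le> n"
  obtains b where "b (n, k) \<noteq> 0" "(n, k) \<in> dom_index_set n k"
    "\<And>x y. P n k x y = b (n, k) * sym_mono n k x y
       + (\<Sum>(m, l) \<in> dom_index_set n k - {(n, k)}. b (m, l) * sym_mono m l x y)"
proof -
  obtain b where b: "b (n, k) \<noteq> 0" "\<And>x y. P n k x y = (\<Sum>(m, l) \<in> dom_index_set n k. b (m, l) * sym_mono m l x y)"
    using assms unfolding dominance_orthogonal_def dom_index_set_def by blast
  moreover have "(n, k) \<in> dom_index_set n k" using assms(2) by (simp add: dom_index_set_def dom_le_def)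
  ultimately show ?thesis using finite_dom_index_set by (intro that) (simp_all add: sum.remove)
qed

lemma dom_strictly_below_if_mem_dom_index_set:
  "(m, l) \<in> dom_index_set n k - {(n, k)} \<Longrightarrow> dom_strictly_below n k (m, l)"
  by (auto simp: dom_index_set_def dom_strictly_below_def dom_below_def dom_le_def max_def)

lemma dominance_orthogonal_leading:
  assumes "dominance_orthogonal w P" "k \<le> n"
  shows "\<exists>b g. b \<noteq> 0 \<and> sym_span (dom_strictly_below n k) g \<and> (\<forall>x y. P n k x y = b * sym_mono n k x y + g x y)"
proof -
  obtain b where b: "b (n, k) \<noteq> 0" "\<And>x y. P n k x y = b (n, k) * sym_mono n k x y
       + (\<Sum>(m, l) \<in> dom_index_set n k - {(n, k)}. b (m, l) * sym_mono m l x y)"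
    using dominance_orthogonal_expansion[OF assms] by blast
  have "sym_span (dom_strictly_below n k)
      (\<lambda>x y. \<Sum>(m, l) \<in> dom_index_set n k - {(n, k)}. b (m, l) * sym_mono m l x y)"
    by (rule sym_span_sum, simp add: finite_dom_index_set)
      (auto intro!: sym_span_term dom_strictly_below_if_mem_dom_index_set)
  with b show ?thesis by blast
qed

lemma dominance_orthogonal_sym_poly:
  assumes "dominance_orthogonal w P" "k \<le> n"
  shows "sym_poly (P n k)"
proof -
  obtain b g where "sym_span (dom_strictly_below n k) g" "\<forall>x y. P n k x y = b * sym_mono n k x y + g x y"
    using dominance_orthogonal_leading[OF assms] by blast
  then show ?thesis
    by (intro sym_span_cong[OF sym_span_add[OF sym_span_term sym_span_sym_poly]]) auto
qed

lemma dominance_orthogonal_orthogonal: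
  assumes "dominance_orthogonal w P" "k \<le> n" "dom_strictly_below n k (a, b)"
  shows "(LINT z:Lambda|lborel. P n k (fst z) (snd z) * sym_mono a b (fst z) (snd z) * w (fst z) (snd z)) = 0"
proof -
  have "sym_mono a b = sym_mono (max a b) (min a b)"
    by (auto simp: fun_eq_iff max_def min_def sym_mono_swap)
  moreover have "min a b \<le> max a b" "dom_lt (max a b, min a b) (n, k)"
    using assms(3) by (auto simp: dom_strictly_below_def dom_below_def dom_lt_def dom_le_def max_def min_def)
  ultimately show ?thesis
    using assms(1,2) unfolding dominance_orthogonal_def by simp
qed

lemma one_one_mem_closure_Lambda: "(1, 1) \<in> closure Lambda"
proof (unfold closure_approachable, intro allI impI)
  fix e :: real assume "e > 0"
  define d where "d = min (e / 4) (1 / 4)"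
  have d: "d > 0" "d \<le> e / 4" "d \<le> 1 / 4" using \<open>e > 0\<close> by (auto simp: d_def)
  have "dist (1 - d, 1 - 2 * d) (1::real, 1::real) = sqrt (d\<^sup>2 + (2 * d)\<^sup>2)"
    by (simp add: dist_Pair_Pair dist_real_def)
  also have "\<dots> \<le> \<bar>d\<bar> + \<bar>2 * d\<bar>" by (rule sqrt_sum_squares_le_sum_abs)
  finally have "dist (1 - d, 1 - 2 * d) (1, 1) < e" using d by simp
  moreover have "(1 - d, 1 - 2 * d) \<in> Lambda" using d by (simp add: Lambda_def)
  ultimately show "\<exists>z\<in>Lambda. dist z (1, 1) < e" by blast
qed

lemma sym_poly_zero_on_closure:
  assumes w: "moments_finite w" and w_pos: "\<And>z. z \<in> Lambda \<Longrightarrow> w (fst z) (snd z) > 0"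
    and D: "sym_poly D"
    and I: "(LINT z:Lambda|lborel. D (fst z) (snd z) * D (fst z) (snd z) * w (fst z) (snd z)) = 0"
    and z: "z \<in> closure Lambda"
  shows "D (fst z) (snd z) = 0"
proof -
  let ?f = "\<lambda>z. indicator Lambda z *\<^sub>R (D (fst z) (snd z) * D (fst z) (snd z) * w (fst z) (snd z))"
  have int: "integrable lborel ?f"
    using set_integrable_sym_span[OF w sym_poly_mult[OF D D]] unfolding set_integrable_def by simp
  have "0 \<le> ?f z" for z
    using w_pos[of z] by (cases "z \<in> Lambda") auto
  with I have "AE z in lborel. ?f z = 0"
    using integral_nonneg_eq_0_iff_AE[OF int] unfolding set_lebesgue_integral_def by simp
  then have "AE z in lborel. z \<in> Lambda \<longrightarrow> z \<in> {z. D (fst z) (snd z) = 0}"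
    by eventually_elim (use w_pos in fastforce)
  then have ae: "AE z \<in> Lambda in lebesgue. z \<in> {z. D (fst z) (snd z) = 0}"
    by (rule AE_completion)
  have cl: "closed {z. D (fst z) (snd z) = 0}"
    using sym_span_continuous[OF D] by (intro closed_Collect_eq) (auto simp: continuous_on_const)
  have "Lambda \<subseteq> {z. D (fst z) (snd z) = 0}"
    using mem_closed_if_AE_lebesgue_open[OF open_Lambda cl ae] by blast
  from closure_minimal[OF this cl] z show ?thesis by blast
qed

lemma orthogonal_leading_proportional:
  assumes w: "moments_finite w" and w_pos: "\<And>z. z \<in> Lambda \<Longrightarrow> w (fst z) (snd z) > 0"
    and P: "dominance_orthogonal w P" and KN: "K \<le> N"
    and F: "\<And>x y. F x y = c * sym_mono N K x y + g x y" and g: "sym_span (dom_strictly_below N K) g"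
    and orth: "\<And>a b. dom_strictly_below N K (a, b) \<Longrightarrow>
      (LINT z:Lambda|lborel. F (fst z) (snd z) * sym_mono a b (fst z) (snd z) * w (fst z) (snd z)) = 0"
  shows "\<exists>c'. \<forall>z \<in> closure Lambda. F (fst z) (snd z) = c' * P N K (fst z) (snd z)"
proof -
  obtain b h where b: "b \<noteq> 0" "sym_span (dom_strictly_below N K) h"
      "\<forall>x y. P N K x y = b * sym_mono N K x y + h x y"
    using dominance_orthogonal_leading[OF P KN] by blast
  define D where "D x y = F x y - (c / b) * P N K x y" for x y
  have "sym_span (dom_strictly_below N K) (\<lambda>x y. g x y - (c / b) * h x y)"
    by (rule sym_span_diff[OF g sym_span_scale[OF b(2)]])
  then have D: "sym_span (dom_strictly_below N K) D"
    by (rule sym_span_cong) (simp add: D_def F b(1,3) algebra_simps)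
  have "sym_poly F"
    by (rule sym_span_cong[OF sym_span_add[OF sym_span_term sym_span_sym_poly[OF g]]]) (auto simp: F)
  note FP = this dominance_orthogonal_sym_poly[OF P KN]
  have int: "set_integrable lborel Lambda (\<lambda>z. F (fst z) (snd z) * D (fst z) (snd z) * w (fst z) (snd z))"
    "set_integrable lborel Lambda (\<lambda>z. (c / b) * (P N K (fst z) (snd z) * D (fst z) (snd z) * w (fst z) (snd z)))"
    using set_integrable_sym_span[OF w sym_poly_mult[OF FP(1) sym_span_sym_poly[OF D]]]
      set_integrable_sym_span[OF w sym_poly_mult[OF FP(2) sym_span_sym_poly[OF D]]] by simp_all
  have pt: "D x y * D x y * w x y = F x y * D x y * w x y - (c / b) * (P N K x y * D x y * w x y)" for x y
  proof -
    have "D x y * D x y * w x y = (F x y - c / b * P N K x y) * (D x y * w x y)"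
      by (metis D_def mult.assoc)
    then show ?thesis by (simp add: algebra_simps)
  qed
  have "(LINT z:Lambda|lborel. D (fst z) (snd z) * D (fst z) (snd z) * w (fst z) (snd z))
      = (LINT z:Lambda|lborel. F (fst z) (snd z) * D (fst z) (snd z) * w (fst z) (snd z)
          - (c / b) * (P N K (fst z) (snd z) * D (fst z) (snd z) * w (fst z) (snd z)))"
    by (simp only: pt)
  also have "\<dots> = (LINT z:Lambda|lborel. F (fst z) (snd z) * D (fst z) (snd z) * w (fst z) (snd z))
      - (c / b) * (LINT z:Lambda|lborel. P N K (fst z) (snd z) * D (fst z) (snd z) * w (fst z) (snd z))"
    using set_integral_diff(2)[OF int] by simp
  also have "\<dots> = 0"
    using orthogonal_sym_span[OF w FP(1) orth D]
      orthogonal_sym_span[OF w FP(2) dominance_orthogonal_orthogonal[OF P KN] D] by simp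
  finally have DD: "(LINT z:Lambda|lborel. D (fst z) (snd z) * D (fst z) (snd z) * w (fst z) (snd z)) = 0" .
  have "D (fst z) (snd z) = 0" if "z \<in> closure Lambda" for z
    by (rule sym_poly_zero_on_closure[OF w _ sym_span_sym_poly[OF D] DD that]) (rule w_pos)
  then show ?thesis by (intro exI[of _ "c / b"]) (simp add: D_def)
qed

section \<open>Pullbacks of dominance orthogonal polynomials\<close>

lemma pullback_expansion:
  assumes Q: "dominance_orthogonal w Q" and kn: "k \<le> n" and r: "r \<le> 1"
  shows "\<exists>c g. c \<noteq> 0 \<and> sym_span (dom_strictly_below (n + k + r) (n - k)) g \<and>
    (\<forall>x y. \<bar>x\<bar> \<le> 1 \<longrightarrow> \<bar>y\<bar> \<le> 1 \<longrightarrow>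
       (x + y) ^ r * Q n k (xplus x y) (xminus x y) = c * sym_mono (n + k + r) (n - k) x y + g x y)"
proof -
  let ?I = "dom_index_set n k - {(n, k)}"
  obtain b where b: "b (n, k) \<noteq> 0" "(n, k) \<in> dom_index_set n k" "\<And>x y. Q n k x y
      = b (n, k) * sym_mono n k x y + (\<Sum>(m, l) \<in> ?I. b (m, l) * sym_mono m l x y)"
    using dominance_orthogonal_expansion[OF Q kn] by blast
  obtain c g where cg: "c \<noteq> 0" "sym_span (dom_strictly_below_par (n + k + r) (n - k)) g"
      "\<And>x y. pullback_mono r n k x y = c * sym_mono (n + k + r) (n - k) x y + g x y"
    using has_leading_pullback_mono[OF kn r] unfolding has_leading_def by blast
  have lower: "sym_span (dom_strictly_below (n + k + r) (n - k)) (pullback_mono r m l)"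
    if "(m, l) \<in> ?I" for m l
  proof (rule has_leading_imp_sym_span[OF has_leading_pullback_mono])
    have "l \<le> m" "m \<le> n" "m + l \<le> n + k" "(m, l) \<noteq> (n, k)"
      using that by (auto simp: dom_index_set_def dom_le_def)
    with kn show "l \<le> m" "r \<le> 1" "dom_strictly_below (n + k + r) (n - k) (m + l + r, m - l)"
      "\<And>p. dom_strictly_below_par (m + l + r) (m - l) p \<Longrightarrow> dom_strictly_below (n + k + r) (n - k) p"
      using r by (auto simp: dom_strictly_below_par_def dom_strictly_below_def dom_below_def)
  qed
  have "sym_span (dom_strictly_below (n + k + r) (n - k))
      (\<lambda>x y. b (n, k) * g x y + (\<Sum>(m, l) \<in> ?I. b (m, l) * pullback_mono r m l x y))"
    using cg(2) lower finite_dom_index_set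
    by (intro sym_span_add sym_span_scale sym_span_sum)
      (auto simp: dom_strictly_below_par_def split_beta intro: sym_span_mono sym_span_scale)
  moreover have "(x + y) ^ r * Q n k (xplus x y) (xminus x y)
      = b (n, k) * c * sym_mono (n + k + r) (n - k) x y
        + (b (n, k) * g x y + (\<Sum>(m, l) \<in> ?I. b (m, l) * pullback_mono r m l x y))"
    if "\<bar>x\<bar> \<le> 1" "\<bar>y\<bar> \<le> 1" for x y
  proof -
    have "(x + y) ^ r * Q n k (xplus x y) (xminus x y)
        = b (n, k) * pullback_mono r n k x y + (\<Sum>(m, l) \<in> ?I. b (m, l) * pullback_mono r m l x y)"
      unfolding b(3) distrib_left sum_distrib_left using b(2)
      by (intro arg_cong2[where f = "(+)"] sum.cong)
        (auto simp: dom_index_set_def pullback_mono_eq[OF that] algebra_simps)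
    then show ?thesis by (simp add: cg(3) algebra_simps)
  qed
  ultimately show ?thesis using b(1) cg(1) by (intro exI[of _ "b (n, k) * c"]) auto
qed

lemma sym_mono_pullback_span_strictly_below:
  assumes kn: "k \<le> n" and ab: "dom_strictly_below (n + k + r) (n - k) (a, b)" and r: "(a + b) mod 2 = r"
  shows "pullback_span r (dom_strictly_below n k) (sym_mono a b)"
proof -
  define a' b' where "a' = max a b" and "b' = min a b"
  define m l where "m = (a + b) div 2" and "l = (a' - b') div 2"
  have ba: "b' \<le> a'" and sw: "sym_mono a b = sym_mono a' b'" and s: "a' + b' = a + b"
    by (auto simp: a'_def b'_def fun_eq_iff max_def min_def sym_mono_swap)
  have "m + l + r = a'"
    using div2_add_div2_diff[OF ba] r unfolding m_def l_def s by simp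
  moreover have "a' + b' = 2 * m + r"
    using div_mult_mod_eq[of "a + b" 2] r unfolding m_def s by linarith
  moreover have "a' \<le> n + k + r" "a' + b' \<le> 2 * n + r" "\<not> (a' = n + k + r \<and> a' + b' = 2 * n + r)"
    using ab kn unfolding s by (auto simp: dom_strictly_below_def dom_below_def a'_def)
  ultimately have "m \<le> n" "m + l \<le> n + k" "\<not> (m = n \<and> m + l = n + k)" by linarith+
  then have below: "dom_strictly_below n k z" if "dom_below m l z" for z
    using that by (auto simp: dom_strictly_below_def dom_below_def)
  have "pullback_span r (dom_below m l) (sym_mono a' b')"
    using sym_mono_pullback_span[OF ba] unfolding s r m_def l_def .
  then show ?thesis unfolding sw by (rule pullback_span_mono) (rule below)
qed

lemma powr_nat_minus_half:
  assumes "0 < a"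
  shows "a powr (real r - 1 / 2) = sqrt a ^ (2 * r) / sqrt a"
proof -
  have "sqrt a ^ (2 * r) = a ^ r"
    using assms by (simp add: power_mult real_sqrt_pow2)
  moreover have "a powr (real r - 1 / 2) = a powr real r / a powr (1 / 2)"
    by (rule powr_diff)
  ultimately show ?thesis
    using assms by (simp add: powr_realpow powr_half_sqrt)
qed

lemma branch_pullback_weight:
  assumes \<epsilon>: "\<epsilon> \<in> {-1, 1}" and z: "(u, v) \<in> Lambda"
    and V: "\<forall>(x, y) \<in> Lambda. V (xplus x y) (xminus x y) = W x y"
  defines "x \<equiv> fst (branch \<epsilon> (u, v))" and "y \<equiv> snd (branch \<epsilon> (u, v))"
  shows "(x + y) ^ r * A (xplus x y) (xminus x y) * B x y * (W x y * (x - y)) * branch_jacobian u v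
    = \<epsilon> ^ r * (sqrt (1 + u) * sqrt (1 + v)) ^ r * A u v * B x y * V u v
      * ((u - v) / (4 * sqrt (1 + u) * sqrt (1 + v)))"
proof -
  have "(x, y) \<in> Lambda"
    using branch_mem_Lambda_half[OF \<epsilon> z] Lambda_half_subset unfolding x_def y_def by auto
  moreover have uv: "xplus x y = u" "xminus x y = v"
    using xplus_branch[OF \<epsilon> z] xminus_branch[OF \<epsilon> z] unfolding x_def y_def by simp_all
  ultimately have W: "W x y = V u v" using V by auto
  have "0 < 1 - u" "0 < 1 - v" "0 < 1 + u" "0 < 1 + v" using z by (auto simp: Lambda_iff)
  then have J: "(x - y) * branch_jacobian u v = (u - v) / (4 * sqrt (1 + u) * sqrt (1 + v))"
    using fst_branch_diff_snd[of \<epsilon> u v] unfolding x_def y_def branch_jacobian_def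
    by (simp add: field_simps)
  have S: "x + y = \<epsilon> * (sqrt (1 + u) * sqrt (1 + v))"
    using fst_branch_add_snd[of \<epsilon> u v] unfolding x_def y_def by (simp add: mult.assoc)
  have "(x + y) ^ r * A (xplus x y) (xminus x y) * B x y * (W x y * (x - y)) * branch_jacobian u v
      = (x + y) ^ r * A u v * B x y * V u v * ((x - y) * branch_jacobian u v)"
    unfolding uv W by (simp only: ac_simps)
  then show ?thesis unfolding J S by (simp only: power_mult_distrib)
qed

text \<open>The substitution \<open>(u, v) = (xplus x y, xminus x y)\<close> folds the two halves of \<open>Lambda\<close> onto
  \<open>Lambda\<close>; the monomials of the wrong parity cancel, and the others pull back to polynomials
  strictly below \<open>(n, k)\<close>, to which \<open>Q n k\<close> is orthogonal.\<close>

lemma pullback_orthogonal: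
  fixes W V :: "real \<Rightarrow> real \<Rightarrow> real" and Q :: "nat \<Rightarrow> nat \<Rightarrow> real \<Rightarrow> real \<Rightarrow> real"
    and r n k a b :: nat
  defines "wQ \<equiv> \<lambda>x y. (1 + x) powr (real r - 1 / 2) * (1 + y) powr (real r - 1 / 2) * V x y * (x - y)"
    and "f \<equiv> \<lambda>z. (fst z + snd z) ^ r * Q n k (xplus (fst z) (snd z)) (xminus (fst z) (snd z))
      * sym_mono a b (fst z) (snd z) * (W (fst z) (snd z) * (fst z - snd z))"
  assumes V: "\<forall>(x, y) \<in> Lambda. V (xplus x y) (xminus x y) = W x y"
    and r: "r \<le> 1" and mom: "moments_finite wQ" and Q: "dominance_orthogonal wQ Q"
    and kn: "k \<le> n" and ab: "dom_strictly_below (n + k + r) (n - k) (a, b)"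
    and f: "set_integrable lborel Lambda f"
  shows "(LINT z:Lambda|lborel. f z) = 0"
proof -
  let ?branches = "\<lambda>z. (f (branch 1 z) + f (branch (-1) z)) * branch_jacobian (fst z) (snd z)"
  have sym: "sym_mono a b (fst (branch (-1) z)) (snd (branch (-1) z))
      = (-1) ^ (a + b) * sym_mono a b (fst (branch 1 z)) (snd (branch 1 z))" for z
    by (simp add: branch_neg sym_mono_neg_swap)
  have branches: "?branches (u, v) = (1 + (-1) ^ (a + b + r)) * (sqrt (1 + u) * sqrt (1 + v)) ^ r
      * Q n k u v * sym_mono a b (fst (branch 1 (u, v))) (snd (branch 1 (u, v))) * V u v
      * ((u - v) / (4 * sqrt (1 + u) * sqrt (1 + v)))" if "(u, v) \<in> Lambda" for u v
    unfolding f_def distrib_right fst_conv snd_conv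
      branch_pullback_weight[of 1, OF _ that V, simplified, where A = "Q n k" and B = "sym_mono a b"]
      branch_pullback_weight[of "-1", OF _ that V, simplified, where A = "Q n k" and B = "sym_mono a b"]
    unfolding sym by (simp add: power_add algebra_simps)
  have "(LINT z:Lambda|lborel. f z) = (LINT z:Lambda|lborel. ?branches z)"
    using set_integral_Lambda_branches[OF f] by simp
  also have "\<dots> = 0"
  proof (cases "even (a + b + r)")
    case False
    then have "?branches z = 0" if "z \<in> Lambda" for z
      using branches[of "fst z" "snd z"] that by simp
    then have "(LINT z:Lambda|lborel. ?branches z) = (LINT z:Lambda|lborel. 0)"
      by (intro set_lebesgue_integral_cong) simp_all
    then show ?thesis by simp
  next
    case True
    then have "(a + b) mod 2 = r" using r by presburger
    from sym_mono_pullback_span_strictly_below[OF kn ab this]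
    obtain H where H: "sym_span (dom_strictly_below n k) H"
      "\<forall>x y. \<bar>x\<bar> \<le> 1 \<longrightarrow> \<bar>y\<bar> \<le> 1 \<longrightarrow> sym_mono a b x y = (x + y) ^ r * H (xplus x y) (xminus x y)"
      unfolding pullback_span_def by blast
    have "?branches z = 1 / 2 * (Q n k (fst z) (snd z) * H (fst z) (snd z) * wQ (fst z) (snd z))"
      if "z \<in> Lambda" for z
    proof -
      obtain u v where z: "z = (u, v)" by fastforce
      define x y where "x = fst (branch 1 (u, v))" and "y = snd (branch 1 (u, v))"
      have "(x, y) \<in> Lambda" using branch_mem_Lambda_half[of 1 u v] Lambda_half_subset that z
        unfolding x_def y_def by auto
      then have m: "sym_mono a b x y = (sqrt (1 + u) * sqrt (1 + v)) ^ r * H u v"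
        using H(2) Lambda_in_square fst_branch_add_snd[of 1 u v] xplus_branch[of 1 u v]
          xminus_branch[of 1 u v] that z unfolding x_def y_def by fastforce
      have pos: "0 < 1 + u" "0 < 1 + v" using that z by (auto simp: Lambda_iff)
      then have sp: "0 < sqrt (1 + u)" "0 < sqrt (1 + v)" by simp_all
      have wQ: "wQ u v = sqrt (1 + u) ^ (2 * r) / sqrt (1 + u) * (sqrt (1 + v) ^ (2 * r) / sqrt (1 + v))
          * V u v * (u - v)"
        unfolding wQ_def powr_nat_minus_half[OF pos(1)] powr_nat_minus_half[OF pos(2)] ..
      have "(-1::real) ^ (a + b + r) = 1" using True by simp
      then have "?branches z = 2 * (sqrt (1 + u) * sqrt (1 + v)) ^ r * Q n k u v * sym_mono a b x y * V u v
          * ((u - v) / (4 * sqrt (1 + u) * sqrt (1 + v)))"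
        using branches[OF that[unfolded z]] unfolding z x_def y_def by simp
      also have "\<dots> = 1 / 2 * (Q n k u v * H u v * wQ u v)"
        unfolding m wQ using sp by (simp add: power_mult power_mult_distrib power2_eq_square field_simps)
      finally show ?thesis by (simp add: z)
    qed
    then have "(LINT z:Lambda|lborel. ?branches z)
        = (LINT z:Lambda|lborel. 1 / 2 * (Q n k (fst z) (snd z) * H (fst z) (snd z) * wQ (fst z) (snd z)))"
      by (intro set_lebesgue_integral_cong) simp_all
    also have "\<dots> = 1 / 2 * (LINT z:Lambda|lborel. Q n k (fst z) (snd z) * H (fst z) (snd z) * wQ (fst z) (snd z))"
      by simp
    also have "\<dots> = 0"
      using orthogonal_sym_span[OF mom dominance_orthogonal_sym_poly[OF Q kn]
          dominance_orthogonal_orthogonal[OF Q kn] H(1)] by simp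
    finally show ?thesis .
  qed
  finally show ?thesis .
qed

lemma pullback_ratio:
  fixes W V :: "real \<Rightarrow> real \<Rightarrow> real" and P Q :: "nat \<Rightarrow> nat \<Rightarrow> real \<Rightarrow> real \<Rightarrow> real"
    and r n k :: nat
  defines "wQ \<equiv> \<lambda>x y. (1 + x) powr (real r - 1 / 2) * (1 + y) powr (real r - 1 / 2) * V x y * (x - y)"
  assumes W_pos: "\<forall>(x, y) \<in> Lambda. W x y > 0"
    and V: "\<forall>(x, y) \<in> Lambda. V (xplus x y) (xminus x y) = W x y"
    and momP: "moments_finite (\<lambda>x y. W x y * (x - y))"
    and P: "dominance_orthogonal (\<lambda>x y. W x y * (x - y)) P"
    and r: "r \<le> 1" and momQ: "moments_finite wQ" and Q: "dominance_orthogonal wQ Q"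
    and kn: "k \<le> n" and Q_one: "Q n k 1 1 \<noteq> 0" and xy: "(x, y) \<in> Lambda"
  shows "(x + y) ^ r * Q n k (xplus x y) (xminus x y) / (2 ^ r * Q n k 1 1)
    = P (n + k + r) (n - k) x y / P (n + k + r) (n - k) 1 1"
proof -
  let ?w = "\<lambda>x y. W x y * (x - y)"
  obtain c g where cg: "c \<noteq> 0" "sym_span (dom_strictly_below (n + k + r) (n - k)) g"
    "\<forall>x y. \<bar>x\<bar> \<le> 1 \<longrightarrow> \<bar>y\<bar> \<le> 1 \<longrightarrow>
       (x + y) ^ r * Q n k (xplus x y) (xminus x y) = c * sym_mono (n + k + r) (n - k) x y + g x y"
    using pullback_expansion[OF Q[unfolded wQ_def] kn r] by blast
  define F where "F x y = c * sym_mono (n + k + r) (n - k) x y + g x y" for x y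
  have F: "F x y = (x + y) ^ r * Q n k (xplus x y) (xminus x y)" if "(x, y) \<in> Lambda \<or> (x, y) = (1, 1)" for x y
  proof -
    have "\<bar>x\<bar> \<le> 1" "\<bar>y\<bar> \<le> 1" using that Lambda_in_square by auto
    with cg(3) show ?thesis by (simp add: F_def)
  qed
  have "sym_poly (\<lambda>x y. c * sym_mono (n + k + r) (n - k) x y + g x y)"
    by (intro sym_span_add sym_span_term sym_span_sym_poly[OF cg(2)]) simp
  then have "sym_poly F" by (rule sym_span_cong) (simp add: F_def)
  have orth: "(LINT z:Lambda|lborel. F (fst z) (snd z) * sym_mono a b (fst z) (snd z) * ?w (fst z) (snd z)) = 0"
    if ab: "dom_strictly_below (n + k + r) (n - k) (a, b)" for a b
  proof -
    have eq: "F (fst z) (snd z) * sym_mono a b (fst z) (snd z) * ?w (fst z) (snd z)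
        = (fst z + snd z) ^ r * Q n k (xplus (fst z) (snd z)) (xminus (fst z) (snd z))
          * sym_mono a b (fst z) (snd z) * (W (fst z) (snd z) * (fst z - snd z))" if "z \<in> Lambda" for z
      using F[of "fst z" "snd z"] that by simp
    have "set_integrable lborel Lambda (\<lambda>z. F (fst z) (snd z) * sym_mono a b (fst z) (snd z) * ?w (fst z) (snd z))"
      using set_integrable_sym_span[OF momP sym_poly_mult[OF \<open>sym_poly F\<close> sym_poly_sym_mono]] by simp
    moreover have "set_integrable lborel Lambda (\<lambda>z. F (fst z) (snd z) * sym_mono a b (fst z) (snd z) * ?w (fst z) (snd z))
      \<longleftrightarrow> set_integrable lborel Lambda (\<lambda>z. (fst z + snd z) ^ r * Q n k (xplus (fst z) (snd z)) (xminus (fst z) (snd z))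
          * sym_mono a b (fst z) (snd z) * (W (fst z) (snd z) * (fst z - snd z)))"
      by (rule set_integrable_cong) (simp_all add: eq)
    moreover have "(LINT z:Lambda|lborel. F (fst z) (snd z) * sym_mono a b (fst z) (snd z) * ?w (fst z) (snd z))
        = (LINT z:Lambda|lborel. (fst z + snd z) ^ r * Q n k (xplus (fst z) (snd z)) (xminus (fst z) (snd z))
          * sym_mono a b (fst z) (snd z) * (W (fst z) (snd z) * (fst z - snd z)))"
      by (intro set_lebesgue_integral_cong) (simp_all add: eq)
    ultimately show ?thesis
      using pullback_orthogonal[OF V r momQ[unfolded wQ_def] Q[unfolded wQ_def] kn ab] by simp
  qed
  have W_pos': "\<And>z. z \<in> Lambda \<Longrightarrow> ?w (fst z) (snd z) > 0"
    using W_pos by (auto simp: Lambda_def)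
  have "n - k \<le> n + k + r" by simp
  from orthogonal_leading_proportional[OF momP W_pos' P this F_def cg(2) orth]
  obtain c' where c': "\<forall>z \<in> closure Lambda. F (fst z) (snd z) = c' * P (n + k + r) (n - k) (fst z) (snd z)"
    by blast
  have "F 1 1 = 2 ^ r * Q n k 1 1" using F[of 1 1] by simp
  moreover have "F 1 1 = c' * P (n + k + r) (n - k) 1 1"
    using c' one_one_mem_closure_Lambda by fastforce
  moreover have "F x y = c' * P (n + k + r) (n - k) x y"
    using c' xy closure_subset by fastforce
  ultimately have num: "(x + y) ^ r * Q n k (xplus x y) (xminus x y) = c' * P (n + k + r) (n - k) x y"
    and den: "2 ^ r * Q n k 1 1 = c' * P (n + k + r) (n - k) 1 1"
    using F[of x y] xy by simp_all
  moreover have "c' \<noteq> 0" "P (n + k + r) (n - k) 1 1 \<noteq> 0" using den Q_one by auto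
  ultimately show ?thesis by simp
qed

theorem proposition3p3:
  fixes W V :: "real \<Rightarrow> real \<Rightarrow> real"
    and P Q R :: "nat \<Rightarrow> nat \<Rightarrow> real \<Rightarrow> real \<Rightarrow> real"
  assumes W_pos: "\<forall>(x, y) \<in> Lambda. W x y > 0"
    and W_sym: "\<forall>(x, y) \<in> Lambda. W x y = W (- y) (- x)"
    and V_def: "\<forall>(x, y) \<in> Lambda.
        V (x * y + sqrt (1 - x ^ 2) * sqrt (1 - y ^ 2))
          (x * y - sqrt (1 - x ^ 2) * sqrt (1 - y ^ 2)) = W x y"
    and momP: "moments_finite (\<lambda>x y. W x y * (x - y))"
    and momQ: "moments_finite (\<lambda>x y. (1 + x) powr (-1/2) * (1 + y) powr (-1/2) * V x y * (x - y))"
    and momR: "moments_finite (\<lambda>x y. (1 + x) powr (1/2) * (1 + y) powr (1/2) * V x y * (x - y))"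
    and P_orth: "dominance_orthogonal (\<lambda>x y. W x y * (x - y)) P"
    and Q_orth: "dominance_orthogonal
        (\<lambda>x y. (1 + x) powr (-1/2) * (1 + y) powr (-1/2) * V x y * (x - y)) Q"
    and R_orth: "dominance_orthogonal
        (\<lambda>x y. (1 + x) powr (1/2) * (1 + y) powr (1/2) * V x y * (x - y)) R"
    and P_one: "\<forall>n k. k \<le> n \<longrightarrow> P n k 1 1 \<noteq> 0"
    and Q_one: "\<forall>n k. k \<le> n \<longrightarrow> Q n k 1 1 \<noteq> 0"
    and R_one: "\<forall>n k. k \<le> n \<longrightarrow> R n k 1 1 \<noteq> 0"
  shows "\<forall>n k. k \<le> n \<longrightarrow> (\<forall>(x, y) \<in> Lambda.
      Q n k (x * y + sqrt (1 - x ^ 2) * sqrt (1 - y ^ 2))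
            (x * y - sqrt (1 - x ^ 2) * sqrt (1 - y ^ 2)) / Q n k 1 1
        = P (n + k) (n - k) x y / P (n + k) (n - k) 1 1
    \<and> (x + y) * R n k (x * y + sqrt (1 - x ^ 2) * sqrt (1 - y ^ 2))
            (x * y - sqrt (1 - x ^ 2) * sqrt (1 - y ^ 2)) / (2 * R n k 1 1)
        = P (n + k + 1) (n - k) x y / P (n + k + 1) (n - k) 1 1)"
proof -
  have V: "\<forall>(x, y) \<in> Lambda. V (xplus x y) (xminus x y) = W x y"
    using V_def by (simp add: xplus_def xminus_def)
  have w0: "(\<lambda>x y. (1 + x) powr (real 0 - 1 / 2) * (1 + y) powr (real 0 - 1 / 2) * V x y * (x - y))
      = (\<lambda>x y. (1 + x) powr (-1/2) * (1 + y) powr (-1/2) * V x y * (x - y))"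
    and w1: "(\<lambda>x y. (1 + x) powr (real 1 - 1 / 2) * (1 + y) powr (real 1 - 1 / 2) * V x y * (x - y))
      = (\<lambda>x y. (1 + x) powr (1/2) * (1 + y) powr (1/2) * V x y * (x - y))"
    by simp_all
  note ratio0 = pullback_ratio[where r = 0 and V = V, unfolded w0, OF W_pos V momP P_orth _ momQ Q_orth]
  note ratio1 = pullback_ratio[where r = 1 and V = V, unfolded w1, OF W_pos V momP P_orth _ momR R_orth]
  show ?thesis
    using ratio0 ratio1 Q_one R_one by (auto simp: xplus_def xminus_def)
qed

end
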